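(* There exists a language $L\subseteq\{0,1\}^*$ with the following two properties. (i) For every $\epsilon>0$, $L$ has a quantum property tester with distance parameter $\epsilon$ making $O(1/\epsilon)$ queries (the constant in the $O$ independent of the input length $n$). (ii) Every classical probabilistic property tester for $L$ with distance parameter $1/3$ makes $\Omega(\log n)$ queries on inputs of length $n$.
   Context: A language $L$ is viewed as the family of properties $P_n=L\cap\{0,1\}^n$; an input $x\in\{0,1\}^n$ is accessed as an oracle $i\mapsto x_i$. For $P\subseteq\{0,1\}^n$ and $\epsilon>0$, $x$ is called $\epsilon$-far from $P$ if $x$ differs from every $y\in P$ in more than $\epsilon n$ positions. A (classical) property tester for $P$ with distance parameter $\epsilon$ is a probabilistic oracle algorithm that accepts every $x\in P$ with probability at least $2/3$ and accepts every $x$ that is $\epsilon$-far from $P$ with probability at most $1/3$; its complexity is the (worst-case) number of oracle queries. A quantum property tester is defined identically except that the algorithm is a quantum algorithm accessing $x$ through the unitary oracle $O_x:\lvert i,b,z\rangle\mapsto\lvert i,b\oplus x_i,z\rangle$. A tester has one-sided error if it accepts every $x\in P$ with probability $1$. *)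

theory Defs
  imports "HOL-Probability.Probability"
begin

text \<open>The oracle bit x_i (for indices beyond the input length it is False).\<close>

definition oracle_bit :: "bool list \<Rightarrow> nat \<Rightarrow> bool" where
  "oracle_bit x i = (i < length x \<and> x ! i)"

definition hamming :: "bool list \<Rightarrow> bool list \<Rightarrow> nat" where
  "hamming x y = card {i. i < length x \<and> x ! i \<noteq> y ! i}"

definition eps_far :: "bool list set \<Rightarrow> nat \<Rightarrow> real \<Rightarrow> bool list \<Rightarrow> bool" where
  "eps_far L n eps x \<longleftrightarrow> (\<forall>y\<in>L. length y = n \<longrightarrow> real (hamming x y) > eps * real n)"

text \<open>Basis states |i,b,z> with i < n (index register), b a bit,
  z < m (workspace of dimension m).\<close>
type_synonym qbasis = "nat \<times> bool \<times> nat"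
type_synonym qstate = "qbasis \<Rightarrow> complex"
type_synonym qop = "qbasis \<Rightarrow> qbasis \<Rightarrow> complex"

definition qspace :: "nat \<Rightarrow> nat \<Rightarrow> qbasis set" where
  "qspace n m = {..<n} \<times> (UNIV :: bool set) \<times> {..<m}"

definition is_unitary :: "nat \<Rightarrow> nat \<Rightarrow> qop \<Rightarrow> bool" where
  "is_unitary n m U \<longleftrightarrow>
     (\<forall>s t. (s \<notin> qspace n m \<or> t \<notin> qspace n m) \<longrightarrow> U s t = 0) \<and>
     (\<forall>s\<in>qspace n m. \<forall>t\<in>qspace n m.
        (\<Sum>k\<in>qspace n m. cnj (U k s) * U k t) = (if s = t then 1 else 0))"

definition qapply :: "nat \<Rightarrow> nat \<Rightarrow> qop \<Rightarrow> qstate \<Rightarrow> qstate" where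
  "qapply n m U \<psi> = (\<lambda>s. if s \<in> qspace n m then (\<Sum>t\<in>qspace n m. U s t * \<psi> t) else 0)"

definition qoracle :: "bool list \<Rightarrow> qstate \<Rightarrow> qstate" where
  "qoracle x \<psi> = (\<lambda>(i, b, z). \<psi> (i, b \<noteq> oracle_bit x i, z))"

definition qinit :: qstate where
  "qinit = (\<lambda>s. if s = (0, False, 0) then 1 else 0)"

text \<open>Final state U_q O_x ... U_1 O_x U_0 |0,0,0>, where Us = [U_1,...,U_q]
  (q = length Us oracle queries).\<close>
definition qfinal :: "nat \<Rightarrow> nat \<Rightarrow> qop \<Rightarrow> qop list \<Rightarrow> bool list \<Rightarrow> qstate" where
  "qfinal n m U0 Us x = foldl (\<lambda>\<psi> U. qapply n m U (qoracle x \<psi>)) (qapply n m U0 qinit) Us"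

definition qaccept_prob :: "nat \<Rightarrow> nat \<Rightarrow> qop \<Rightarrow> qop list \<Rightarrow> qbasis set \<Rightarrow> bool list \<Rightarrow> real" where
  "qaccept_prob n m U0 Us A x = (\<Sum>s\<in>A. (cmod (qfinal n m U0 Us x s))\<^sup>2)"

definition quantum_tester :: "bool list set \<Rightarrow> nat \<Rightarrow> real \<Rightarrow> nat \<Rightarrow> bool" where
  "quantum_tester L n eps q \<longleftrightarrow>
     (\<exists>m U0 Us A. m \<ge> 1 \<and> length Us = q \<and> is_unitary n m U0 \<and>
        (\<forall>U\<in>set Us. is_unitary n m U) \<and> A \<subseteq> qspace n m \<and>
        (\<forall>x. length x = n \<longrightarrow>
           (x \<in> L \<longrightarrow> qaccept_prob n m U0 Us A x \<ge> 2/3) \<and>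
           (eps_far L n eps x \<longrightarrow> qaccept_prob n m U0 Us A x \<le> 1/3)))"

text \<open>A probabilistic oracle algorithm is a probability distribution over
  deterministic adaptive query algorithms (decision trees).
  Query i l r: query x_i, continue in r if x_i = 1, in l otherwise.\<close>
datatype dtree = Leaf bool | Query nat dtree dtree

fun dt_eval :: "dtree \<Rightarrow> bool list \<Rightarrow> bool" where
  "dt_eval (Leaf b) x = b"
| "dt_eval (Query i l r) x = (if oracle_bit x i then dt_eval r x else dt_eval l x)"

fun dt_depth :: "dtree \<Rightarrow> nat" where
  "dt_depth (Leaf b) = 0"
| "dt_depth (Query i l r) = Suc (max (dt_depth l) (dt_depth r))"

definition classical_tester :: "bool list set \<Rightarrow> nat \<Rightarrow> real \<Rightarrow> nat \<Rightarrow> bool" where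
  "classical_tester L n eps q \<longleftrightarrow>
     (\<exists>p :: dtree pmf. (\<forall>T\<in>set_pmf p. dt_depth T \<le> q) \<and>
        (\<forall>x. length x = n \<longrightarrow>
           (x \<in> L \<longrightarrow> measure_pmf.prob p {T. dt_eval T x} \<ge> 2/3) \<and>
           (eps_far L n eps x \<longrightarrow> measure_pmf.prob p {T. dt_eval T x} \<le> 1/3)))"

end

theory Submission
  imports Defs
begin

(*
  The language: a word of length n repeats, with period 4^r for the largest r with
  2 * 4^r <= n, the Hadamard code word of a message s = (s1, s2) in {0,1}^r x {0,1}^r
  whose halves have even inner product, i.e. whose quadratic sign (-1)^(s1.s2) is 1.

  Quantum upper bound: one phase query followed by the Hadamard transform samples a
  message a with probability (F(a)/4^r)^2, where F(a) is the correlation of the word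
  with the code word of a; another t = O(1/eps) queries check the sampled code word at
  random positions. A word of the language is accepted with certainty. For an eps-far
  word every a of quadratic sign 1 agrees with it on at most a (1 - eps) fraction of the
  positions, so by Parseval the acceptance probability is at most (1 - eps)^t.

  Classical lower bound: the answers along a path of a decision tree restrict the
  message to an affine subspace, on which the quadratic sign sums to at most 2^r in
  absolute value. Hence a tree of depth q correlates with the quadratic sign by at most
  2^q * 2^r, whereas a tester must correlate with it by about 4^r / 6; so
  2^q >= c * 2^r, and r is about (log n) / 2.
*)

section \<open>Walsh characters\<close>

definition walsh :: "nat \<Rightarrow> nat \<Rightarrow> nat \<Rightarrow> real" where
  "walsh k s j = (\<Prod>i<k. if bit s i \<and> bit j i then -1 else 1)"

lemma walsh_xor: "walsh k (xor s s') j = walsh k s j * walsh k s' j"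
  unfolding walsh_def prod.distrib[symmetric]
  by (rule prod.cong) (auto simp: bit_xor_iff)

lemma walsh_commute: "walsh k s j = walsh k j s"
  unfolding walsh_def by (rule prod.cong) auto

lemma walsh_xor_right: "walsh k s (xor j j') = walsh k s j * walsh k s j'"
  by (metis walsh_commute walsh_xor)

lemma walsh_0_right [simp]: "walsh k s 0 = 1"
  unfolding walsh_def by simp

lemma walsh_0_left [simp]: "walsh k 0 j = 1"
  unfolding walsh_def by simp

lemma abs_walsh [simp]: "\<bar>walsh k s j\<bar> = 1"
  unfolding walsh_def abs_prod by (rule prod.neutral) auto

lemma walsh_cases: "walsh k s j = 1 \<or> walsh k s j = -1"
  using abs_walsh[of k s j] by (simp add: abs_eq_iff' del: abs_walsh)

lemma walsh_pow2:
  assumes "i < k"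
  shows "walsh k s (2^i) = (if bit s i then -1 else 1)"
proof -
  have "walsh k s (2^i) = (\<Prod>l<k. if l = i then (if bit s i then -1 else 1) else 1)"
    unfolding walsh_def by (rule prod.cong) (auto simp: bit_exp_iff)
  then show ?thesis using assms by (simp add: prod.delta)
qed

lemma xor_less_pow2: "(s::nat) < 2^k \<Longrightarrow> w < 2^k \<Longrightarrow> xor s w < 2^k"
  by (metis take_bit_nat_eq_self_iff take_bit_xor)

lemma xor_eq_0_iff: "xor (s::nat) s' = 0 \<longleftrightarrow> s = s'"
  by (metis xor.assoc xor_self_eq xor.left_neutral xor.right_neutral)

lemma exists_bit_less_if_nonzero:
  assumes "(s::nat) \<noteq> 0" "s < 2^k"
  shows "\<exists>i<k. bit s i"
proof -
  obtain i where i: "bit s i" using assms(1) bit_eq_iff[of s 0] by auto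
  have "take_bit k s = s" using assms(2) by (simp add: take_bit_nat_eq_self_iff)
  then have "i < k" using i bit_take_bit_iff[of k s i] by auto
  with i show ?thesis by blast
qed

lemma sum_eq_0_by_xor_involution:
  fixes f :: "nat \<Rightarrow> real"
  assumes "finite D" "\<And>s. s \<in> D \<Longrightarrow> xor s d \<in> D" "\<And>s. s \<in> D \<Longrightarrow> f (xor s d) = - f s"
  shows "sum f D = 0"
proof -
  have "sum f D = sum (\<lambda>s. f (xor s d)) D"
    by (rule sum.reindex_bij_witness[of _ "\<lambda>s. xor s d" "\<lambda>s. xor s d"])
       (use assms(2) in \<open>auto simp: xor.assoc\<close>)
  also have "\<dots> = - sum f D" using assms(3) by (simp add: sum_negf)
  finally show ?thesis by simp
qed

lemma sum_walsh:
  assumes "u < 2^k"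
  shows "(\<Sum>s<2^k. walsh k s u) = (if u = 0 then 2^k else 0)"
proof (cases "u = 0")
  case False
  then obtain i where i: "i < k" "bit u i" using exists_bit_less_if_nonzero assms by blast
  have "(\<Sum>s<2^k. walsh k s u) = 0"
  proof (rule sum_eq_0_by_xor_involution[where d = "2^i"])
    fix s assume "s \<in> {..<(2::nat)^k}"
    then show "xor s (2^i) \<in> {..<2^k}" using xor_less_pow2 i by (simp add: less_trans)
    show "walsh k (xor s (2^i)) u = - walsh k s u"
      using walsh_xor[of k s "2^i" u] walsh_commute[of k "2^i" u] walsh_pow2[OF i(1), of u] i by simp
  qed simp
  then show ?thesis using False by simp
qed simp

section \<open>The quadratic sign and its polarisation\<close>

text \<open>A number \<open>s < 4^r\<close> is read as a pair of \<open>r\<close>-bit halves \<open>(s\<^sub>1, s\<^sub>2)\<close>; \<open>quad_sign r s\<close> is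
  \<open>(-1)^(s\<^sub>1\<cdot>s\<^sub>2)\<close> and \<open>polar_sign r s w = (-1)^(s\<^sub>1\<cdot>w\<^sub>2 + s\<^sub>2\<cdot>w\<^sub>1)\<close> is its polarisation.\<close>

definition quad_sign :: "nat \<Rightarrow> nat \<Rightarrow> real" where
  "quad_sign r s = (\<Prod>i<r. if bit s i \<and> bit s (i+r) then -1 else 1)"

definition polar_sign :: "nat \<Rightarrow> nat \<Rightarrow> nat \<Rightarrow> real" where
  "polar_sign r s w = (\<Prod>i<r. (if bit s i \<and> bit w (i+r) then -1 else 1) * (if bit s (i+r) \<and> bit w i then -1 else 1))"

lemma abs_quad_sign [simp]: "\<bar>quad_sign r s\<bar> = 1"
  unfolding quad_sign_def abs_prod by (rule prod.neutral) auto

lemma quad_sign_cases: "quad_sign r s = 1 \<or> quad_sign r s = -1"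
  using abs_quad_sign[of r s] by (simp add: abs_eq_iff' del: abs_quad_sign)

lemma abs_polar_sign [simp]: "\<bar>polar_sign r s w\<bar> = 1"
  unfolding polar_sign_def abs_prod by (rule prod.neutral) (auto simp: abs_mult)

lemma polar_sign_cases: "polar_sign r s w = 1 \<or> polar_sign r s w = -1"
  using abs_polar_sign[of r s w] by (simp add: abs_eq_iff' del: abs_polar_sign)

lemma quad_sign_square: "quad_sign r s * quad_sign r s = 1"
  using quad_sign_cases[of r s] by auto

lemma quad_sign_xor: "quad_sign r (xor s w) = quad_sign r s * quad_sign r w * polar_sign r s w"
  unfolding quad_sign_def polar_sign_def prod.distrib[symmetric]
  by (rule prod.cong) (auto simp: bit_xor_iff)

lemma polar_sign_commute: "polar_sign r s w = polar_sign r w s"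
  unfolding polar_sign_def by (rule prod.cong) auto

lemma polar_sign_xor_left: "polar_sign r (xor s s') w = polar_sign r s w * polar_sign r s' w"
  unfolding polar_sign_def prod.distrib[symmetric]
  by (rule prod.cong) (auto simp: bit_xor_iff)

lemma polar_sign_xor_right: "polar_sign r w (xor s s') = polar_sign r w s * polar_sign r w s'"
  using polar_sign_xor_left polar_sign_commute by metis

lemma polar_sign_0_left [simp]: "polar_sign r 0 w = 1"
  unfolding polar_sign_def by simp

lemma polar_sign_pow2_high:
  assumes "i < r" "bit d i"
  shows "polar_sign r d (2^(i+r)) = -1"
proof -
  have "polar_sign r d (2^(i+r)) = (\<Prod>l<r. if l = i then -1 else 1)"
    unfolding polar_sign_def by (rule prod.cong) (use assms in \<open>auto simp: bit_exp_iff\<close>)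
  then show ?thesis using assms by (simp add: prod.delta)
qed

lemma polar_sign_pow2_low:
  assumes "i < r" "bit d (i+r)"
  shows "polar_sign r d (2^i) = -1"
proof -
  have "polar_sign r d (2^i) = (\<Prod>l<r. if l = i then -1 else 1)"
    unfolding polar_sign_def by (rule prod.cong) (use assms in \<open>auto simp: bit_exp_iff\<close>)
  then show ?thesis using assms by (simp add: prod.delta)
qed

lemma power4_eq_power2: "(4::'a::comm_semiring_1)^r = 2^(2*r)"
  by (simp add: power_mult)

lemma xor_less_power4: "(s::nat) < 4^r \<Longrightarrow> w < 4^r \<Longrightarrow> xor s w < 4^r"
  using xor_less_pow2 power4_eq_power2 by metis

lemma sum_polar_sign:
  assumes "d < 4^r"
  shows "(\<Sum>w<4^r. polar_sign r d w) = (if d = 0 then 4^r else 0)"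
proof (cases "d = 0")
  case False
  then obtain i where i: "i < 2*r" "bit d i"
    using exists_bit_less_if_nonzero assms power4_eq_power2 by metis
  obtain j where j: "j < 2*r" "polar_sign r d (2^j) = -1"
  proof (cases "i < r")
    case True
    then show ?thesis using that[of "i+r"] polar_sign_pow2_high[OF True i(2)] by simp
  next
    case False
    then have "i - r < r" "bit d (i - r + r)" using i by auto
    then show ?thesis using that[of "i - r"] polar_sign_pow2_low by simp
  qed
  have "(\<Sum>w<4^r. polar_sign r d w) = 0"
  proof (rule sum_eq_0_by_xor_involution[where d = "2^j"])
    fix s assume "s \<in> {..<(4::nat)^r}"
    then show "xor s (2^j) \<in> {..<4^r}"
      using xor_less_pow2[of s "2*r" "2^j"] j power4_eq_power2[where 'a=nat] by (simp add: less_trans)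
    show "polar_sign r d (xor s (2^j)) = - polar_sign r d s"
      using polar_sign_xor_right[of r d s "2^j"] j by simp
  qed simp
  then show ?thesis using False by simp
qed simp

section \<open>Sums of the quadratic sign over affine subspaces\<close>

text \<open>A list \<open>C\<close> of pairs \<open>(u, b)\<close> records the answers \<open>walsh (2*r) s u = -1 \<longleftrightarrow> b\<close>; the
  words consistent with them form a coset of the annihilator of the queried points.\<close>

definition consistent :: "nat \<Rightarrow> (nat \<times> bool) list \<Rightarrow> nat set" where
  "consistent r C = {s. s < 4^r \<and> (\<forall>p\<in>set C. (walsh (2*r) s (fst p) = -1) = snd p)}"

definition annihilator :: "nat \<Rightarrow> (nat \<times> bool) list \<Rightarrow> nat set" where
  "annihilator r C = {s. s < 4^r \<and> (\<forall>p\<in>set C. walsh (2*r) s (fst p) = 1)}"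

lemma finite_consistent [simp]: "finite (consistent r C)"
  unfolding consistent_def by auto

lemma finite_annihilator [simp]: "finite (annihilator r C)"
  unfolding annihilator_def by auto

lemma zero_in_annihilator: "0 \<in> annihilator r C"
  unfolding annihilator_def by auto

lemma annihilator_subset: "annihilator r C \<subseteq> {..<4^r}"
  unfolding annihilator_def by auto

lemma consistent_Nil: "consistent r [] = {..<4^r}"
  unfolding consistent_def by auto

lemma consistent_split:
  "consistent r C = consistent r ((u, True) # C) \<union> consistent r ((u, False) # C)"
  "consistent r ((u, True) # C) \<inter> consistent r ((u, False) # C) = {}"
  unfolding consistent_def by auto

lemma annihilator_xor: "a \<in> annihilator r C \<Longrightarrow> d \<in> annihilator r C \<Longrightarrow> xor a d \<in> annihilator r C"
  unfolding annihilator_def by (auto simp: walsh_xor xor_less_power4)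

lemma consistent_xor_annihilator:
  "a \<in> consistent r C \<Longrightarrow> d \<in> annihilator r C \<Longrightarrow> xor a d \<in> consistent r C"
  unfolding consistent_def annihilator_def by (fastforce simp: walsh_xor xor_less_power4)

lemma consistent_xor_consistent:
  "a \<in> consistent r C \<Longrightarrow> s \<in> consistent r C \<Longrightarrow> xor a s \<in> annihilator r C"
proof -
  assume a: "a \<in> consistent r C" and s: "s \<in> consistent r C"
  show ?thesis unfolding annihilator_def
  proof (intro CollectI conjI ballI)
    show "xor a s < 4^r" using a s xor_less_power4 unfolding consistent_def by auto
    fix p assume p: "p \<in> set C"
    then have "(walsh (2*r) a (fst p) = -1) = snd p" "(walsh (2*r) s (fst p) = -1) = snd p"
      using a s unfolding consistent_def by auto
    then show "walsh (2 * r) (xor a s) (fst p) = 1"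
      using walsh_cases[of "2*r" a "fst p"] walsh_cases[of "2*r" s "fst p"] by (auto simp: walsh_xor)
  qed
qed

lemma sum_consistent_reindex:
  assumes "a \<in> consistent r C"
  shows "sum f (consistent r C) = (\<Sum>d\<in>annihilator r C. f (xor a d))"
  by (rule sum.reindex_bij_witness[of _ "\<lambda>s. xor a s" "\<lambda>s. xor a s"])
     (use assms consistent_xor_annihilator consistent_xor_consistent
      in \<open>auto simp: xor.assoc[symmetric]\<close>)

lemma sum_annihilator_polar_sign_nonneg: "(\<Sum>e\<in>annihilator r C. polar_sign r e d) \<ge> 0"
proof (cases "\<exists>e\<^sub>0\<in>annihilator r C. polar_sign r e\<^sub>0 d = -1")
  case True
  then obtain e\<^sub>0 where "e\<^sub>0 \<in> annihilator r C" "polar_sign r e\<^sub>0 d = -1" by blast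
  then have "(\<Sum>e\<in>annihilator r C. polar_sign r e d) = 0"
    by (intro sum_eq_0_by_xor_involution[where d = e\<^sub>0])
       (auto simp: annihilator_xor polar_sign_xor_left)
  then show ?thesis by simp
next
  case False
  then have "\<forall>e\<in>annihilator r C. polar_sign r e d = 1" using polar_sign_cases by blast
  then show ?thesis by simp
qed

text \<open>Substituting \<open>s' = xor s d\<close> turns the square into a double sum of polar signs over the
  annihilator, whose inner sums are nonnegative; \<open>sum_polar_sign\<close> then leaves only \<open>d = 0\<close>.\<close>

lemma square_sum_quad_sign_consistent:
  assumes a: "a \<in> consistent r C"
  shows "(\<Sum>s\<in>consistent r C. quad_sign r s)^2 =
    (\<Sum>d\<in>annihilator r C. quad_sign r d * polar_sign r a d * (\<Sum>e\<in>annihilator r C. polar_sign r e d))"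
proof -
  let ?V = "consistent r C" and ?D = "annihilator r C"
  have "(\<Sum>s\<in>?V. quad_sign r s)^2 = (\<Sum>s\<in>?V. quad_sign r s * (\<Sum>s'\<in>?V. quad_sign r s'))"
    by (simp add: power2_eq_square sum_distrib_right)
  also have "\<dots> = (\<Sum>s\<in>?V. \<Sum>d\<in>?D. quad_sign r d * polar_sign r s d)"
  proof (rule sum.cong[OF refl])
    fix s assume s: "s \<in> ?V"
    have "quad_sign r s * (\<Sum>s'\<in>?V. quad_sign r s') =
        (\<Sum>d\<in>?D. (quad_sign r s * quad_sign r s) * quad_sign r d * polar_sign r s d)"
      by (simp add: sum_consistent_reindex[OF s] sum_distrib_left quad_sign_xor mult.assoc)
    then show "quad_sign r s * (\<Sum>s'\<in>?V. quad_sign r s') = (\<Sum>d\<in>?D. quad_sign r d * polar_sign r s d)"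
      by (simp add: quad_sign_square)
  qed
  also have "\<dots> = (\<Sum>d\<in>?D. quad_sign r d * (\<Sum>s\<in>?V. polar_sign r s d))"
    by (subst sum.swap) (simp add: sum_distrib_left)
  also have "\<dots> = (\<Sum>d\<in>?D. quad_sign r d * polar_sign r a d * (\<Sum>e\<in>?D. polar_sign r e d))"
    by (simp add: sum_consistent_reindex[OF a] polar_sign_xor_left sum_distrib_left mult.assoc)
  finally show ?thesis .
qed

lemma sum_quad_sign_consistent_square_le: "(\<Sum>s\<in>consistent r C. quad_sign r s)^2 \<le> 4^r"
proof (cases "consistent r C = {}")
  case False
  then obtain a where a: "a \<in> consistent r C" by blast
  let ?D = "annihilator r C"
  have "(\<Sum>s\<in>consistent r C. quad_sign r s)^2 \<le> (\<Sum>d\<in>?D. \<Sum>e\<in>?D. polar_sign r e d)"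
    unfolding square_sum_quad_sign_consistent[OF a]
  proof (rule sum_mono)
    fix d
    have "quad_sign r d * polar_sign r a d * (\<Sum>e\<in>?D. polar_sign r e d)
        \<le> \<bar>quad_sign r d * polar_sign r a d * (\<Sum>e\<in>?D. polar_sign r e d)\<bar>" by simp
    also have "\<dots> = (\<Sum>e\<in>?D. polar_sign r e d)"
      using sum_annihilator_polar_sign_nonneg[where r=r and C=C and d=d] by (simp add: abs_mult)
    finally show "quad_sign r d * polar_sign r a d * (\<Sum>e\<in>?D. polar_sign r e d) \<le> \<dots>" .
  qed
  also have "\<dots> \<le> (\<Sum>d<4^r. \<Sum>e\<in>?D. polar_sign r e d)"
    by (rule sum_mono2) (use annihilator_subset sum_annihilator_polar_sign_nonneg in auto)
  also have "\<dots> = (\<Sum>e\<in>?D. \<Sum>d<4^r. polar_sign r e d)" by (rule sum.swap)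
  also have "\<dots> = (\<Sum>e\<in>?D. if e = 0 then 4^r else 0)"
    using annihilator_subset by (intro sum.cong refl sum_polar_sign) auto
  also have "\<dots> = 4^r" using zero_in_annihilator[of r C] by (simp add: sum.delta)
  finally show ?thesis .
qed simp

lemma abs_sum_quad_sign_consistent_le: "\<bar>\<Sum>s\<in>consistent r C. quad_sign r s\<bar> \<le> 2^r"
proof (rule power2_le_imp_le)
  show "\<bar>\<Sum>s\<in>consistent r C. quad_sign r s\<bar>^2 \<le> (2^r)^2"
    using sum_quad_sign_consistent_square_le[of r C] by (simp only: power4_eq_power2 power_even_eq power2_abs)
qed simp

section \<open>The language\<close>

definition block_exp :: "nat \<Rightarrow> nat" where
  "block_exp n = Max {r. r \<le> n \<and> (r = 0 \<or> 2 * 4^r \<le> n)}"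

lemma block_exp_mem: "block_exp n \<in> {r. r \<le> n \<and> (r = 0 \<or> 2 * 4^r \<le> n)}"
  unfolding block_exp_def by (rule Max_in) auto

lemma block_exp_greatest: "r \<le> n \<Longrightarrow> 2 * 4^r \<le> n \<Longrightarrow> r \<le> block_exp n"
  unfolding block_exp_def by (rule Max_ge) auto

lemma power4_block_exp_le: "n \<ge> 1 \<Longrightarrow> 4^(block_exp n) \<le> n"
  using block_exp_mem[of n] by auto

lemma two_power4_block_exp_le: "n \<ge> 2 \<Longrightarrow> 2 * 4^(block_exp n) \<le> n"
  using block_exp_mem[of n] by auto

lemma less_power4: "r < (4::nat)^r"
  by (induction r) auto

lemma less_two_power4_Suc_block_exp: "n < 2 * 4^(Suc (block_exp n))"
proof (rule ccontr)
  assume "\<not> n < 2 * 4^(Suc (block_exp n))"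
  then have le: "2 * 4^(Suc (block_exp n)) \<le> n" by simp
  then have "Suc (block_exp n) \<le> n" using less_power4[of "Suc (block_exp n)"] by linarith
  then show False using block_exp_greatest[OF _ le] by simp
qed

text \<open>A word of length \<open>n\<close> in \<open>quad_code_lang\<close> is the Hadamard code word of some \<open>s < 4^r\<close> with
  \<open>quad_sign r s = 1\<close>, repeated periodically, where \<open>r = block_exp n\<close> is the largest exponent
  for which the code word fits at least twice into the word.\<close>

definition code_word :: "nat \<Rightarrow> nat \<Rightarrow> nat \<Rightarrow> bool list" where
  "code_word r n s = map (\<lambda>j. walsh (2*r) s (j mod 4^r) = -1) [0..<n]"

definition quad_code_lang :: "bool list set" where
  "quad_code_lang = {x. \<exists>s < 4^block_exp (length x). quad_sign (block_exp (length x)) s = 1 \<and>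
              x = code_word (block_exp (length x)) (length x) s}"

lemma length_code_word [simp]: "length (code_word r n s) = n"
  unfolding code_word_def by simp

lemma nth_code_word: "j < n \<Longrightarrow> code_word r n s ! j = (walsh (2*r) s (j mod 4^r) = -1)"
  unfolding code_word_def by simp

lemma code_word_in_quad_code_lang:
  "s < 4^block_exp n \<Longrightarrow> quad_sign (block_exp n) s = 1 \<Longrightarrow> code_word (block_exp n) n s \<in> quad_code_lang"
  unfolding quad_code_lang_def by auto

lemma quad_code_langE:
  assumes "x \<in> quad_code_lang" "length x = n"
  obtains s where "s < 4^block_exp n" "quad_sign (block_exp n) s = 1" "x = code_word (block_exp n) n s"
  using assms unfolding quad_code_lang_def by auto

text \<open>Positions beyond the word are read as \<open>False\<close>, which is what the character at \<open>0\<close> gives.\<close>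

definition code_pos :: "nat \<Rightarrow> nat \<Rightarrow> nat \<Rightarrow> nat" where
  "code_pos r n j = (if j < n then j mod 4^r else 0)"

lemma oracle_bit_code_word: "oracle_bit (code_word r n s) j = (walsh (2*r) s (code_pos r n j) = -1)"
  unfolding oracle_bit_def code_pos_def by (auto simp: nth_code_word)

section \<open>Distance between code words\<close>

lemma card_walsh_minus:
  assumes "u < 2^k" "u \<noteq> 0"
  shows "2 * card {j. j < 2^k \<and> walsh k u j = -1} = 2^k"
proof -
  let ?M = "{j. j < 2^k \<and> walsh k u j = -1}" and ?P = "{j. j < 2^k \<and> walsh k u j = 1}"
  have dj: "?P \<inter> ?M = {}" by auto
  have un: "{..<2^k} = ?P \<union> ?M"
  proof (rule set_eqI)
    fix j show "j \<in> {..<2^k} \<longleftrightarrow> j \<in> ?P \<union> ?M" using walsh_cases[of k u j] by auto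
  qed
  have "0 = (\<Sum>j<2^k. walsh k j u)" using sum_walsh[OF assms(1)] assms(2) by simp
  also have "\<dots> = (\<Sum>j<2^k. walsh k u j)" by (simp only: walsh_commute[of k _ u])
  also have "\<dots> = (\<Sum>j\<in>?P. walsh k u j) + (\<Sum>j\<in>?M. walsh k u j)"
    unfolding un by (rule sum.union_disjoint) (use dj in auto)
  also have "\<dots> = (\<Sum>j\<in>?P. 1) + (\<Sum>j\<in>?M. -1)"
    by (intro arg_cong2[where f = "(+)"] sum.cong) auto
  finally have "card ?P = card ?M" by simp
  moreover have "card ?P + card ?M = 2^k"
    using card_Un_disjoint[of ?P ?M] dj by (simp add: un[symmetric])
  ultimately show ?thesis by simp
qed

lemma card_periodic:
  assumes "K > 0"
  shows "card {j. j < t*K \<and> P (j mod K)} = t * card {j. j < K \<and> P j}"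
proof -
  let ?f = "\<lambda>(a, b). a*K + b"
  have "{j. j < t*K \<and> P (j mod K)} = ?f ` ({..<t} \<times> {j. j < K \<and> P j})"
  proof (rule set_eqI, rule iffI)
    fix j assume j: "j \<in> {j. j < t*K \<and> P (j mod K)}"
    then have "j div K < t" using assms by (simp add: div_less_iff_less_mult)
    then show "j \<in> ?f ` ({..<t} \<times> {j. j < K \<and> P j})"
      using j assms by (intro image_eqI[of _ _ "(j div K, j mod K)"]) auto
  next
    fix j assume "j \<in> ?f ` ({..<t} \<times> {j. j < K \<and> P j})"
    then obtain a b where ab: "a < t" "b < K" "P b" "j = a*K + b" by auto
    have "a*K + b < (a+1)*K" using ab by simp
    also have "\<dots> \<le> t*K" using ab by (intro mult_right_mono) auto
    finally show "j \<in> {j. j < t*K \<and> P (j mod K)}" using ab by simp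
  qed
  moreover have "inj_on ?f ({..<t} \<times> {j. j < K \<and> P j})"
  proof (rule inj_onI, clarsimp)
    fix a b a' b' assume "b < K" "b' < K" "a*K + b = a'*K + b'"
    then have "(a*K + b) div K = (a'*K + b') div K" "(a*K + b) mod K = (a'*K + b') mod K" by simp_all
    then show "a = a' \<and> b = b'" using \<open>b < K\<close> \<open>b' < K\<close> assms by simp
  qed
  ultimately show ?thesis by (simp add: card_image card_cartesian_product)
qed

lemma hamming_code_word:
  "hamming (code_word r n s) (code_word r n s') = card {j. j < n \<and> walsh (2*r) (xor s s') (j mod 4^r) = -1}"
  unfolding hamming_def
proof (intro arg_cong[where f = card] set_eqI iffI)
  fix j assume "j \<in> {i. i < length (code_word r n s) \<and> code_word r n s ! i \<noteq> code_word r n s' ! i}"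
  then show "j \<in> {j. j < n \<and> walsh (2*r) (xor s s') (j mod 4^r) = -1}"
    using walsh_cases[of "2*r" s "j mod 4^r"] walsh_cases[of "2*r" s' "j mod 4^r"]
    by (auto simp: nth_code_word walsh_xor)
next
  fix j assume "j \<in> {j. j < n \<and> walsh (2*r) (xor s s') (j mod 4^r) = -1}"
  then show "j \<in> {i. i < length (code_word r n s) \<and> code_word r n s ! i \<noteq> code_word r n s' ! i}"
    using walsh_cases[of "2*r" s "j mod 4^r"] walsh_cases[of "2*r" s' "j mod 4^r"]
    by (auto simp: nth_code_word walsh_xor)
qed

text \<open>Distinct code words differ in half of each full period, and there are at least two
  full periods.\<close>

lemma hamming_code_word_gt:
  assumes "s < 4^r" "s' < 4^r" "s \<noteq> s'" "2 * 4^r \<le> n"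
  shows "real (hamming (code_word r n s) (code_word r n s')) > real n / 3"
proof -
  let ?K = "4^r :: nat" and ?P = "\<lambda>j. walsh (2*r) (xor s s') j = -1"
  define t where "t = n div ?K"
  define h where "h = hamming (code_word r n s) (code_word r n s')"
  define c where "c = card {j. j < ?K \<and> ?P j}"
  have "xor s s' < 2^(2*r)" "xor s s' \<noteq> 0"
    using assms(1-3) xor_less_power4[of s r s'] by (simp_all add: xor_eq_0_iff flip: power4_eq_power2)
  then have "2 * card {j. j < 2^(2*r) \<and> ?P j} = 2^(2*r)" by (rule card_walsh_minus)
  then have half: "2 * c = ?K" unfolding c_def by (simp only: power4_eq_power2)
  have "t * ?K \<le> n" unfolding t_def by simp
  then have "card {j. j < t * ?K \<and> ?P (j mod ?K)} \<le> card {j. j < n \<and> ?P (j mod ?K)}"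
    by (intro card_mono) auto
  then have "t * c \<le> h"
    unfolding h_def c_def hamming_code_word using card_periodic[of ?K t ?P] by simp
  moreover have "t * ?K = 2 * (t * c)" using half by (metis mult.left_commute)
  moreover have "n < t * ?K + ?K"
  proof -
    have "n mod ?K < ?K" by simp
    then show ?thesis using div_mult_mod_eq[of n ?K] unfolding t_def by linarith
  qed
  moreover have "2 * ?K \<le> t * ?K"
    using div_le_mono[OF assms(4), of ?K] unfolding t_def by simp
  ultimately have "n < 3 * h" by linarith
  then show ?thesis unfolding h_def by linarith
qed

lemma code_word_far:
  assumes "n \<ge> 2" "s < 4^block_exp n" "quad_sign (block_exp n) s \<noteq> 1"
  shows "eps_far quad_code_lang n (1/3) (code_word (block_exp n) n s)"
  unfolding eps_far_def
proof (intro ballI impI)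
  fix y assume "y \<in> quad_code_lang" "length y = n"
  then obtain s' where s': "s' < 4^block_exp n" "quad_sign (block_exp n) s' = 1"
    and y: "y = code_word (block_exp n) n s'"
    by (rule quad_code_langE)
  have "s \<noteq> s'" using s' assms by auto
  then show "real (hamming (code_word (block_exp n) n s) y) > 1/3 * real n"
    using hamming_code_word_gt[OF assms(2) s'(1) _ two_power4_block_exp_le[OF assms(1)]] y by simp
qed

section \<open>The classical lower bound\<close>

text \<open>Following a branch of the tree restricts the code word to an affine subspace of
  \<open>s\<close>'s, on which the sum of the quadratic sign is at most \<open>2^r\<close> in absolute value.\<close>

lemma abs_sum_quad_sign_accepted_le:
  "\<bar>\<Sum>s\<in>consistent r C. quad_sign r s * of_bool (dt_eval T (code_word r n s))\<bar> \<le> 2^dt_depth T * 2^r"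
proof (induction T arbitrary: C)
  case (Leaf b)
  have "\<bar>\<Sum>s\<in>consistent r C. quad_sign r s\<bar> \<le> 2^r" by (rule abs_sum_quad_sign_consistent_le)
  then show ?case by (cases b) simp_all
next
  case (Query j l rt)
  let ?u = "code_pos r n j"
  let ?f = "\<lambda>T s. quad_sign r s * of_bool (dt_eval T (code_word r n s))"
  have rt: "(\<Sum>s\<in>consistent r ((?u, True) # C). ?f (Query j l rt) s) = (\<Sum>s\<in>consistent r ((?u, True) # C). ?f rt s)"
    by (rule sum.cong[OF refl]) (simp add: consistent_def oracle_bit_code_word)
  have l: "(\<Sum>s\<in>consistent r ((?u, False) # C). ?f (Query j l rt) s) = (\<Sum>s\<in>consistent r ((?u, False) # C). ?f l s)"
    by (rule sum.cong[OF refl]) (simp add: consistent_def oracle_bit_code_word)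
  have "(\<Sum>s\<in>consistent r C. ?f (Query j l rt) s) =
        (\<Sum>s\<in>consistent r ((?u, True) # C). ?f (Query j l rt) s) +
        (\<Sum>s\<in>consistent r ((?u, False) # C). ?f (Query j l rt) s)"
    by (subst consistent_split(1)[of r C ?u], rule sum.union_disjoint) (auto simp: consistent_split(2))
  also have "\<dots> = (\<Sum>s\<in>consistent r ((?u, True) # C). ?f rt s) + (\<Sum>s\<in>consistent r ((?u, False) # C). ?f l s)"
    unfolding rt l ..
  finally have decompose: "(\<Sum>s\<in>consistent r C. ?f (Query j l rt) s) = \<dots>" .
  have bound_rt: "\<bar>\<Sum>s\<in>consistent r ((?u, True) # C). ?f rt s\<bar> \<le> 2^max (dt_depth l) (dt_depth rt) * 2^r"
    using Query.IH(2)[of "(?u, True) # C"] by (rule order.trans) (simp add: power_increasing)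
  have bound_l: "\<bar>\<Sum>s\<in>consistent r ((?u, False) # C). ?f l s\<bar> \<le> 2^max (dt_depth l) (dt_depth rt) * 2^r"
    using Query.IH(1)[of "(?u, False) # C"] by (rule order.trans) (simp add: power_increasing)
  have "\<bar>\<Sum>s\<in>consistent r C. ?f (Query j l rt) s\<bar> \<le>
      \<bar>\<Sum>s\<in>consistent r ((?u, True) # C). ?f rt s\<bar> + \<bar>\<Sum>s\<in>consistent r ((?u, False) # C). ?f l s\<bar>"
    unfolding decompose by (rule abs_triangle_ineq)
  also have "\<dots> \<le> 2^max (dt_depth l) (dt_depth rt) * 2^r + 2^max (dt_depth l) (dt_depth rt) * 2^r"
    using bound_rt bound_l by (rule add_mono)
  also have "\<dots> = 2^dt_depth (Query j l rt) * 2^r" by simp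
  finally show ?case .
qed

lemma sum_quad_sign_prob_accept_le:
  fixes p :: "dtree pmf"
  assumes "\<forall>T\<in>set_pmf p. dt_depth T \<le> q"
  shows "(\<Sum>s<4^r. quad_sign r s * measure_pmf.prob p {T. dt_eval T (code_word r n s)}) \<le> 2^q * 2^r"
proof -
  let ?A = "\<lambda>s. {T. dt_eval T (code_word r n s)}"
  define f where "f T = (\<Sum>s<4^r. quad_sign r s * indicator (?A s) T)" for T
  have integrable: "integrable (measure_pmf p) (\<lambda>T. quad_sign r s * indicator (?A s) T)" for s
    by (intro integrable_mult_right integrable_real_indicator)
       (auto simp: less_top[symmetric] measure_pmf.emeasure_finite)
  have "(\<Sum>s<4^r. quad_sign r s * measure_pmf.prob p (?A s)) =
        (\<Sum>s<4^r. measure_pmf.expectation p (\<lambda>T. quad_sign r s * indicator (?A s) T))"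
    by (simp add: measure_pmf.emeasure_eq_measure)
  also have "\<dots> = measure_pmf.expectation p f"
    unfolding f_def by (rule Bochner_Integration.integral_sum[symmetric]) (rule integrable)
  also have "\<dots> \<le> 2^q * 2^r"
  proof (rule measure_pmf.integral_le_const)
    show "integrable (measure_pmf p) f"
      unfolding f_def by (rule Bochner_Integration.integrable_sum) (rule integrable)
    show "AE T in measure_pmf p. f T \<le> 2^q * 2^r"
      using AE_measure_pmf[of p]
    proof (rule eventually_mono)
      fix T assume T: "T \<in> set_pmf p"
      have "f T \<le> 2^dt_depth T * 2^r"
        using abs_sum_quad_sign_accepted_le[where r=r and C="[]" and n=n and T=T]
        unfolding f_def consistent_Nil indicator_def by simp
      also have "\<dots> \<le> 2^q * 2^r" using assms T by (simp add: power_increasing)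
      finally show "f T \<le> 2^q * 2^r" .
    qed
  qed
  finally show ?thesis .
qed

text \<open>A correct tester accepts \<open>code_word s\<close> with probability \<open>\<ge> 2/3\<close> when \<open>quad_sign s = 1\<close> and
  \<open>\<le> 1/3\<close> otherwise, so it correlates with the quadratic sign by about \<open>4^r/6\<close>.\<close>

lemma classical_tester_power_bound:
  assumes n: "n \<ge> 2" and tester: "classical_tester quad_code_lang n (1/3) q"
  shows "(4::real)^block_exp n / 6 - 2^block_exp n / 2 \<le> 2^q * 2^block_exp n"
proof -
  let ?r = "block_exp n"
  from tester obtain p :: "dtree pmf" where depth: "\<forall>T\<in>set_pmf p. dt_depth T \<le> q"
    and acc: "\<forall>x. length x = n \<longrightarrow>
           (x \<in> quad_code_lang \<longrightarrow> measure_pmf.prob p {T. dt_eval T x} \<ge> 2/3) \<and>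
           (eps_far quad_code_lang n (1/3) x \<longrightarrow> measure_pmf.prob p {T. dt_eval T x} \<le> 1/3)"
    unfolding classical_tester_def by blast
  define P where "P s = measure_pmf.prob p {T. dt_eval T (code_word ?r n s)}" for s
  have low: "quad_sign ?r s / 2 + 1/6 \<le> quad_sign ?r s * P s" if s: "s < 4^?r" for s
  proof (cases "quad_sign ?r s = 1")
    case True
    then have "P s \<ge> 2/3" using acc code_word_in_quad_code_lang[OF s True] unfolding P_def by simp
    then show ?thesis using True by simp
  next
    case False
    then have "quad_sign ?r s = -1" using quad_sign_cases by blast
    moreover have "P s \<le> 1/3" using acc code_word_far[OF n s False] unfolding P_def by simp
    ultimately show ?thesis by simp
  qed
  have "- (2^?r) \<le> (\<Sum>s<4^?r. quad_sign ?r s)"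
    using abs_sum_quad_sign_consistent_le[of ?r "[]"] unfolding consistent_Nil by simp
  moreover have "(\<Sum>s<4^?r. quad_sign ?r s / 2 + 1/6) = (\<Sum>s<4^?r. quad_sign ?r s) / 2 + 4^?r / 6"
    by (simp add: sum.distrib sum_divide_distrib)
  ultimately have "4^?r / 6 - 2^?r / 2 \<le> (\<Sum>s<4^?r. quad_sign ?r s / 2 + 1/6)"
    by simp
  also have "\<dots> \<le> (\<Sum>s<4^?r. quad_sign ?r s * P s)"
    by (rule sum_mono) (use low in auto)
  also have "\<dots> \<le> 2^q * 2^?r"
    unfolding P_def by (rule sum_quad_sign_prob_accept_le[OF depth])
  finally show ?thesis .
qed

lemma block_exp_le_query:
  assumes r: "5 \<le> r" and bound: "(4::real)^r / 6 - 2^r / 2 \<le> 2^q * 2^r"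
  shows "r \<le> q + 3"
proof (rule ccontr)
  assume "\<not> r \<le> q + 3"
  define X :: real where "X = 2^r"
  have X: "X \<ge> 2^5" unfolding X_def using r by (intro power_increasing) auto
  have "(4::real)^r = X * X" unfolding X_def by (simp flip: power_mult_distrib)
  then have "X * (X / 6 - 1/2) \<le> X * 2^q" using bound unfolding X_def by (simp add: algebra_simps)
  then have "X / 6 - 1/2 \<le> 2^q" using X by (simp add: mult_le_cancel_left)
  moreover have "2^q * 2^4 \<le> X" unfolding X_def power_add[symmetric] using \<open>\<not> r \<le> q + 3\<close> by (intro power_increasing) auto
  ultimately show False using X by simp
qed

lemma ln_less_block_exp: "n \<ge> 1 \<Longrightarrow> ln (real n) < 2 * real (block_exp n) + 3"
proof -
  assume n: "n \<ge> 1"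
  let ?r = "block_exp n"
  have "real n < real (2 * 4^Suc ?r)"
    using less_two_power4_Suc_block_exp[of n] by (simp only: of_nat_less_iff)
  also have "\<dots> = 2^(2 * ?r + 3)" by (simp add: power4_eq_power2 power_add)
  finally have "ln (real n) < ln (2^(2 * ?r + 3))" using n by (intro ln_less_cancel_iff[THEN iffD2]) auto
  also have "\<dots> = real (2 * ?r + 3) * ln 2" by (simp add: ln_realpow)
  also have "\<dots> \<le> real (2 * ?r + 3)" using ln_le_minus_one[of 2] by (intro mult_left_le) auto
  finally show ?thesis by simp
qed

lemma classical_lower_bound:
  "\<exists>c > 0. \<exists>N. \<forall>n \<ge> N. \<forall>q. classical_tester quad_code_lang n (1/3) q \<longrightarrow> real q \<ge> c * ln (real n)"
proof (intro exI[of _ "1/10"] conjI exI[of _ 2048] allI impI)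
  fix n q assume n: "2048 \<le> n" and tester: "classical_tester quad_code_lang n (1/3) q"
  have r: "5 \<le> block_exp n" by (rule block_exp_greatest) (use n in auto)
  have "block_exp n \<le> q + 3"
    using block_exp_le_query[OF r classical_tester_power_bound[OF _ tester]] n by simp
  then have "real (block_exp n) \<le> real q + 3" and "5 \<le> real (block_exp n)" using r by simp_all
  moreover have "ln (real n) < 2 * real (block_exp n) + 3" using n by (intro ln_less_block_exp) simp
  ultimately show "1/10 * ln (real n) \<le> real q" by linarith
qed simp

section \<open>Quantum states as superpositions of basis states\<close>

lemma qspace_mem [simp]: "(i, b, z) \<in> qspace n m \<longleftrightarrow> i < n \<and> z < m"
  unfolding qspace_def by auto

lemma finite_qspace [simp]: "finite (qspace n m)"
  unfolding qspace_def by auto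

lemma sum_qspace: "(\<Sum>s\<in>qspace n m. h s) = (\<Sum>a<n. \<Sum>b\<in>(UNIV::bool set). \<Sum>z<m. h (a, b, z))"
  unfolding qspace_def by (simp add: sum.cartesian_product')

text \<open>\<open>superpos \<Omega> c f\<close> is the state \<open>\<Sum>\<omega>\<in>\<Omega>. c \<omega> |f \<omega>\<rangle>\<close>.\<close>

definition superpos :: "'w set \<Rightarrow> ('w \<Rightarrow> complex) \<Rightarrow> ('w \<Rightarrow> qbasis) \<Rightarrow> qstate" where
  "superpos \<Omega> c f = (\<lambda>s. \<Sum>\<omega>\<in>\<Omega>. if f \<omega> = s then c \<omega> else 0)"

lemma superpos_cong: "(\<And>\<omega>. \<omega> \<in> \<Omega> \<Longrightarrow> f \<omega> = g \<omega>) \<Longrightarrow> superpos \<Omega> c f = superpos \<Omega> c g"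
  unfolding superpos_def by (intro ext sum.cong) auto

lemma qapply_superpos:
  assumes "finite \<Omega>" "f ` \<Omega> \<subseteq> qspace n m"
  shows "qapply n m U (superpos \<Omega> c f) =
    (\<lambda>s. if s \<in> qspace n m then (\<Sum>\<omega>\<in>\<Omega>. c \<omega> * U s (f \<omega>)) else 0)"
proof (rule ext)
  fix s
  have "(\<Sum>t\<in>qspace n m. U s t * superpos \<Omega> c f t) =
      (\<Sum>\<omega>\<in>\<Omega>. \<Sum>t\<in>qspace n m. if f \<omega> = t then c \<omega> * U s t else 0)"
    unfolding superpos_def
    by (subst sum.swap) (simp add: sum_distrib_left if_distrib mult.commute cong: if_cong)
  also have "\<dots> = (\<Sum>\<omega>\<in>\<Omega>. c \<omega> * U s (f \<omega>))"
    using assms(2) by (intro sum.cong refl) (auto simp: sum.delta)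
  finally show "qapply n m U (superpos \<Omega> c f) s =
      (if s \<in> qspace n m then (\<Sum>\<omega>\<in>\<Omega>. c \<omega> * U s (f \<omega>)) else 0)"
    unfolding qapply_def by simp
qed

definition oracle_flip :: "bool list \<Rightarrow> qbasis \<Rightarrow> qbasis" where
  "oracle_flip x = (\<lambda>(i, b, z). (i, b \<noteq> oracle_bit x i, z))"

lemma oracle_flip_involutive [simp]: "oracle_flip x (oracle_flip x s) = s"
  unfolding oracle_flip_def by (cases s) auto

lemma oracle_flip_in_qspace [simp]: "oracle_flip x s \<in> qspace n m \<longleftrightarrow> s \<in> qspace n m"
  unfolding oracle_flip_def by (cases s) auto

lemma qoracle_superpos: "qoracle x (superpos \<Omega> c f) = superpos \<Omega> c (oracle_flip x \<circ> f)"
proof (rule ext)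
  fix s :: qbasis
  obtain i b z where s: "s = (i, b, z)" by (cases s) auto
  have "(f \<omega> = (i, b \<noteq> oracle_bit x i, z)) = (oracle_flip x (f \<omega>) = (i, b, z))" for \<omega>
    by (metis (no_types, lifting) case_prod_conv oracle_flip_def oracle_flip_involutive)
  then show "qoracle x (superpos \<Omega> c f) s = superpos \<Omega> c (oracle_flip x \<circ> f) s"
    unfolding qoracle_def superpos_def s by simp
qed

section \<open>Three unitaries\<close>

definition perm_op :: "nat \<Rightarrow> nat \<Rightarrow> (qbasis \<Rightarrow> qbasis) \<Rightarrow> qop" where
  "perm_op n m \<pi> = (\<lambda>s t. if t \<in> qspace n m \<and> s = \<pi> t then 1 else 0)"

lemma perm_op_unitary:
  assumes "bij_betw \<pi> (qspace n m) (qspace n m)"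
  shows "is_unitary n m (perm_op n m \<pi>)"
  unfolding is_unitary_def
proof (intro conjI allI impI ballI)
  fix s t assume "s \<notin> qspace n m \<or> t \<notin> qspace n m"
  then show "perm_op n m \<pi> s t = 0" unfolding perm_op_def using assms bij_betwE by fastforce
next
  fix s t assume s: "s \<in> qspace n m" and t: "t \<in> qspace n m"
  have "(\<Sum>k\<in>qspace n m. cnj (perm_op n m \<pi> k s) * perm_op n m \<pi> k t)
      = (\<Sum>k\<in>qspace n m. if k = \<pi> s then (if \<pi> s = \<pi> t then 1 else 0) else 0)"
    unfolding perm_op_def using s t by (intro sum.cong) auto
  also have "\<dots> = (if \<pi> s = \<pi> t then 1 else 0)"
    using bij_betwE[OF assms] s by (simp add: sum.delta)
  also have "\<dots> = (if s = t then 1 else 0)"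
    using bij_betw_imp_inj_on[OF assms] s t by (auto dest: inj_onD)
  finally show "(\<Sum>k\<in>qspace n m. cnj (perm_op n m \<pi> k s) * perm_op n m \<pi> k t) = (if s = t then 1 else 0)" .
qed

lemma qapply_perm_op_superpos:
  assumes "finite \<Omega>" "f ` \<Omega> \<subseteq> qspace n m" "\<pi> ` qspace n m \<subseteq> qspace n m"
  shows "qapply n m (perm_op n m \<pi>) (superpos \<Omega> c f) = superpos \<Omega> c (\<pi> \<circ> f)"
proof (rule ext)
  fix s
  show "qapply n m (perm_op n m \<pi>) (superpos \<Omega> c f) s = superpos \<Omega> c (\<pi> \<circ> f) s"
  proof (cases "s \<in> qspace n m")
    case True
    then have "qapply n m (perm_op n m \<pi>) (superpos \<Omega> c f) s = (\<Sum>\<omega>\<in>\<Omega>. c \<omega> * perm_op n m \<pi> s (f \<omega>))"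
      by (simp add: qapply_superpos[OF assms(1,2)])
    also have "\<dots> = superpos \<Omega> c (\<pi> \<circ> f) s"
      unfolding superpos_def perm_op_def using assms(2) by (intro sum.cong) auto
    finally show ?thesis .
  next
    case False
    then have "\<pi> (f \<omega>) \<noteq> s" if "\<omega> \<in> \<Omega>" for \<omega> using assms(2,3) that by auto
    then show ?thesis using False unfolding superpos_def qapply_def by (auto intro!: sum.neutral)
  qed
qed

lemma householder_orthogonal:
  fixes u :: "'a \<Rightarrow> real"
  assumes "finite Q" "s \<in> Q" "t \<in> Q" and \<nu>: "\<nu> = (\<Sum>k\<in>Q. (u k)^2)" "\<nu> \<noteq> 0"
  shows "(\<Sum>k\<in>Q. ((if k = s then 1 else 0) - 2 * u k * u s / \<nu>) * ((if k = t then 1 else 0) - 2 * u k * u t / \<nu>))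
    = (if s = t then 1 else 0)"
proof -
  have "(\<Sum>k\<in>Q. ((if k = s then 1 else 0) - 2 * u k * u s / \<nu>) * ((if k = t then 1 else 0) - 2 * u k * u t / \<nu>))
     = (\<Sum>k\<in>Q. (if k = s then (if k = t then 1 else 0) else 0) - (if k = s then 2 * u k * u t / \<nu> else 0)
          - (if k = t then 2 * u k * u s / \<nu> else 0) + (u k)^2 * (4 * u s * u t / \<nu>^2))"
    by (intro sum.cong) (auto simp: algebra_simps power2_eq_square)
  also have "\<dots> = (if s = t then 1 else 0) - 2 * u s * u t / \<nu> - 2 * u t * u s / \<nu> + \<nu> * (4 * u s * u t / \<nu>^2)"
  proof -
    have "(\<Sum>k\<in>Q. (u k)^2 * (4 * u s * u t / \<nu>^2)) = \<nu> * (4 * u s * u t / \<nu>^2)"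
      unfolding \<nu>(1) by (rule sum_distrib_right[symmetric])
    then show ?thesis using assms(1-3) by (simp only: sum.distrib sum_subtractf) (simp add: sum.delta)
  qed
  also have "\<dots> = (if s = t then 1 else 0)" using \<nu>(2) by (simp add: field_simps power2_eq_square)
  finally show ?thesis .
qed

text \<open>The reflection in the hyperplane orthogonal to \<open>|0,0,0\<rangle> - w\<close> swaps \<open>|0,0,0\<rangle>\<close> and \<open>w\<close>.\<close>

definition householder_op :: "nat \<Rightarrow> nat \<Rightarrow> (qbasis \<Rightarrow> real) \<Rightarrow> qop" where
  "householder_op n m w = (let u = (\<lambda>k. (if k = (0, False, 0) then 1 else 0) - w k);
                    \<nu> = (\<Sum>k\<in>qspace n m. (u k)^2) in
     (\<lambda>s t. if s \<in> qspace n m \<and> t \<in> qspace n m then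
        complex_of_real ((if s = t then 1 else 0) - 2 * u s * u t / \<nu>) else 0))"

context
  fixes n m :: nat and w :: "qbasis \<Rightarrow> real"
  assumes dims: "n \<ge> 1" "m \<ge> 1" and norm: "(\<Sum>k\<in>qspace n m. (w k)^2) = 1"
    and w_neq_1: "w (0, False, 0) \<noteq> 1"
begin

private abbreviation (input) "u \<equiv> \<lambda>k. (if k = (0, False, 0) then 1 else 0) - w k"

private lemma householder_norm: "(\<Sum>k\<in>qspace n m. (u k)^2) = 2 - 2 * w (0, False, 0)"
proof -
  have "(\<Sum>k\<in>qspace n m. (u k)^2) = (\<Sum>k\<in>qspace n m. (if k = (0, False, 0) then 1 - 2 * w k else 0) + (w k)^2)"
    by (intro sum.cong) (auto simp: power2_eq_square algebra_simps)
  also have "\<dots> = 2 - 2 * w (0, False, 0)" using dims norm by (simp add: sum.distrib sum.delta)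
  finally show ?thesis .
qed

private lemma householder_norm_pos: "2 - 2 * w (0, False, 0) > 0"
proof -
  have "(w (0, False, 0))^2 \<le> (\<Sum>k\<in>qspace n m. (w k)^2)" using dims by (intro member_le_sum) auto
  then have "w (0, False, 0) \<le> 1" using norm by (simp add: abs_square_le_1)
  then show ?thesis using w_neq_1 by simp
qed

private lemma householder_op_eq: "householder_op n m w = (\<lambda>s t. if s \<in> qspace n m \<and> t \<in> qspace n m then
    complex_of_real ((if s = t then 1 else 0) - 2 * u s * u t / (2 - 2 * w (0, False, 0))) else 0)"
  unfolding householder_op_def Let_def householder_norm ..

lemma householder_op_unitary: "is_unitary n m (householder_op n m w)"
  unfolding is_unitary_def
proof (intro conjI allI impI ballI)
  fix s t assume "s \<notin> qspace n m \<or> t \<notin> qspace n m"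
  then show "householder_op n m w s t = 0" unfolding householder_op_eq by auto
next
  fix s t assume s: "s \<in> qspace n m" and t: "t \<in> qspace n m"
  have "(\<Sum>k\<in>qspace n m. cnj (householder_op n m w k s) * householder_op n m w k t) =
    complex_of_real (\<Sum>k\<in>qspace n m. ((if k = s then 1 else 0) - 2 * u k * u s / (2 - 2 * w (0, False, 0))) *
      ((if k = t then 1 else 0) - 2 * u k * u t / (2 - 2 * w (0, False, 0))))"
    unfolding householder_op_eq using s t by (simp add: of_real_sum)
  also have "\<dots> = (if s = t then 1 else 0)"
    using householder_orthogonal[OF finite_qspace s t householder_norm[symmetric]] householder_norm_pos
    by simp
  finally show "(\<Sum>k\<in>qspace n m. cnj (householder_op n m w k s) * householder_op n m w k t) =
      (if s = t then 1 else 0)" .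
qed

lemma qapply_householder_op_qinit:
  "qapply n m (householder_op n m w) qinit = (\<lambda>s. if s \<in> qspace n m then complex_of_real (w s) else 0)"
proof (rule ext)
  fix s
  have "(\<Sum>t\<in>qspace n m. householder_op n m w s t * qinit t) = householder_op n m w s (0, False, 0)"
    unfolding qinit_def using dims by (simp add: sum.delta if_distrib cong: if_cong)
  moreover have "householder_op n m w s (0, False, 0) = complex_of_real (w s)" if "s \<in> qspace n m"
  proof -
    have "2 * u s * u (0, False, 0) / (2 - 2 * w (0, False, 0)) = u s"
      using householder_norm_pos by (simp add: field_simps)
    then show ?thesis unfolding householder_op_eq using that dims by simp
  qed
  ultimately show "qapply n m (householder_op n m w) qinit s =
      (if s \<in> qspace n m then complex_of_real (w s) else 0)"
    unfolding qapply_def by simp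
qed

end

definition hadamard_entry :: "nat \<Rightarrow> nat \<Rightarrow> nat \<Rightarrow> real" where
  "hadamard_entry k a i = (if a < 2^k \<and> i < 2^k then walsh k a i / sqrt (2^k) else if a = i then 1 else 0)"

definition hadamard_op :: "nat \<Rightarrow> nat \<Rightarrow> nat \<Rightarrow> qop" where
  "hadamard_op n m k = (\<lambda>s t. if s \<in> qspace n m \<and> t \<in> qspace n m \<and> snd s = snd t
      then complex_of_real (hadamard_entry k (fst s) (fst t)) else 0)"

lemma hadamard_entry_commute: "hadamard_entry k a i = hadamard_entry k i a"
  unfolding hadamard_entry_def by (auto simp: walsh_commute)

lemma hadamard_entry_outside: "\<not> i < 2^k \<Longrightarrow> hadamard_entry k a i = (if a = i then 1 else 0)"
  unfolding hadamard_entry_def by auto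

lemma hadamard_entry_orthonormal:
  assumes "2^k \<le> n" "i < n" "i' < n"
  shows "(\<Sum>a<n. hadamard_entry k a i * hadamard_entry k a i') = (if i = i' then 1 else 0)"
proof (cases "i < 2^k \<and> i' < 2^k")
  case True
  have "(\<Sum>a<n. hadamard_entry k a i * hadamard_entry k a i') = (\<Sum>a<2^k. hadamard_entry k a i * hadamard_entry k a i')"
    using True assms(1) by (intro sum.mono_neutral_right) (auto simp: hadamard_entry_def)
  also have "\<dots> = (\<Sum>a<2^k. walsh k a (xor i i')) / 2^k"
    using True by (simp add: hadamard_entry_def walsh_xor_right sum_divide_distrib)
  also have "\<dots> = (if i = i' then 1 else 0)"
    using sum_walsh[OF xor_less_pow2[of i k i']] True by (simp add: xor_eq_0_iff)
  finally show ?thesis .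
next
  case False
  then consider "\<not> i < 2^k" | "\<not> i' < 2^k" by blast
  then show ?thesis
  proof cases
    case 1
    have "(\<Sum>a<n. hadamard_entry k a i * hadamard_entry k a i') = (\<Sum>a<n. if a = i then hadamard_entry k a i' else 0)"
      using 1 by (intro sum.cong) (auto simp: hadamard_entry_outside)
    then have "(\<Sum>a<n. hadamard_entry k a i * hadamard_entry k a i') = hadamard_entry k i i'"
      using assms(2) by simp
    then show ?thesis using 1 by (simp add: hadamard_entry_commute[of k i] hadamard_entry_outside)
  next
    case 2
    have "(\<Sum>a<n. hadamard_entry k a i * hadamard_entry k a i') = (\<Sum>a<n. if a = i' then hadamard_entry k a i else 0)"
      using 2 by (intro sum.cong) (auto simp: hadamard_entry_outside)
    then have "(\<Sum>a<n. hadamard_entry k a i * hadamard_entry k a i') = hadamard_entry k i' i"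
      using assms(3) by simp
    then show ?thesis using 2 by (auto simp: hadamard_entry_commute[of k i'] hadamard_entry_outside)
  qed
qed

lemma sum_qspace_slice:
  assumes "\<And>k. k \<in> qspace n m \<Longrightarrow> snd k \<noteq> p \<Longrightarrow> g k = 0" "snd p < m"
  shows "(\<Sum>k\<in>qspace n m. g k) = (\<Sum>a<n. g (a, p))"
proof -
  have "(\<Sum>k\<in>qspace n m. g k) = (\<Sum>k\<in>(\<lambda>a. (a, p)) ` {..<n}. g k)"
  proof (rule sum.mono_neutral_right)
    show "(\<lambda>a. (a, p)) ` {..<n} \<subseteq> qspace n m" using assms(2) by (cases p) auto
    show "\<forall>k\<in>qspace n m - (\<lambda>a. (a, p)) ` {..<n}. g k = 0"
      using assms(1) by (force simp: qspace_def)
  qed simp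
  also have "\<dots> = (\<Sum>a<n. g (a, p))" by (subst sum.reindex) (auto simp: inj_on_def)
  finally show ?thesis .
qed

lemma hadamard_op_unitary:
  assumes "2^k \<le> n"
  shows "is_unitary n m (hadamard_op n m k)"
  unfolding is_unitary_def
proof (intro conjI allI impI ballI)
  fix s t assume "s \<notin> qspace n m \<or> t \<notin> qspace n m"
  then show "hadamard_op n m k s t = 0" unfolding hadamard_op_def by auto
next
  fix s t assume s: "s \<in> qspace n m" and t: "t \<in> qspace n m"
  obtain i b z where sp: "s = (i, b, z)" by (cases s) auto
  obtain i' b' z' where tp: "t = (i', b', z')" by (cases t) auto
  have i: "i < n" "i' < n" "z < m" "z' < m" using s t sp tp by auto
  show "(\<Sum>q\<in>qspace n m. cnj (hadamard_op n m k q s) * hadamard_op n m k q t) = (if s = t then 1 else 0)"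
  proof (cases "(b, z) = (b', z')")
    case True
    have "(\<Sum>q\<in>qspace n m. cnj (hadamard_op n m k q s) * hadamard_op n m k q t) =
        (\<Sum>a<n. cnj (hadamard_op n m k (a, b, z) s) * hadamard_op n m k (a, b, z) t)"
      by (rule sum_qspace_slice) (use i in \<open>auto simp: hadamard_op_def sp\<close>)
    also have "\<dots> = complex_of_real (\<Sum>a<n. hadamard_entry k a i * hadamard_entry k a i')"
      unfolding of_real_sum hadamard_op_def sp tp using i True by (intro sum.cong) auto
    also have "\<dots> = (if s = t then 1 else 0)"
      using hadamard_entry_orthonormal[OF assms i(1,2)] sp tp True by auto
    finally show ?thesis .
  next
    case False
    then have "cnj (hadamard_op n m k q s) * hadamard_op n m k q t = 0" for q
      unfolding hadamard_op_def sp tp by auto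
    then have "(\<Sum>q\<in>qspace n m. cnj (hadamard_op n m k q s) * hadamard_op n m k q t) = 0"
      by (simp add: sum.neutral)
    then show ?thesis using sp tp False by auto
  qed
qed

section \<open>The query phase\<close>

text \<open>The workspace holds \<open>t + 1\<close> cells, each a pair of an index and a bit; the list of
  cells is stored as a number below \<open>work_dim n t\<close> through a fixed bijection.\<close>

definition cell_lists :: "nat \<Rightarrow> nat \<Rightarrow> (nat \<times> bool) list set" where
  "cell_lists n t = {cs. length cs = Suc t \<and> (\<forall>c\<in>set cs. fst c < n)}"

lemma finite_cell_lists[simp]: "finite (cell_lists n t)"
proof -
  have "cell_lists n t \<subseteq> {xs. set xs \<subseteq> {..<n} \<times> (UNIV::bool set) \<and> length xs = Suc t}"
    unfolding cell_lists_def by auto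
  moreover have "finite {xs. set xs \<subseteq> {..<n} \<times> (UNIV::bool set) \<and> length xs = Suc t}"
    by (rule finite_lists_length_eq) auto
  ultimately show ?thesis by (rule finite_subset)
qed

definition work_dim :: "nat \<Rightarrow> nat \<Rightarrow> nat" where "work_dim n t = card (cell_lists n t)"

definition cell_code :: "nat \<Rightarrow> nat \<Rightarrow> (nat \<times> bool) list \<Rightarrow> nat" where
  "cell_code n t = (SOME h. bij_betw h (cell_lists n t) {0..<work_dim n t})"

lemma cell_code_bij: "bij_betw (cell_code n t) (cell_lists n t) {0..<work_dim n t}"
  unfolding cell_code_def work_dim_def by (rule someI_ex[OF ex_bij_betw_finite_nat[OF finite_cell_lists]])

definition cell_decode :: "nat \<Rightarrow> nat \<Rightarrow> nat \<Rightarrow> (nat \<times> bool) list" where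
  "cell_decode n t = the_inv_into (cell_lists n t) (cell_code n t)"

lemma cell_code_inj: "inj_on (cell_code n t) (cell_lists n t)"
  using cell_code_bij bij_betw_imp_inj_on by blast

lemma cell_decode_code[simp]: "cs \<in> cell_lists n t \<Longrightarrow> cell_decode n t (cell_code n t cs) = cs"
  unfolding cell_decode_def by (rule the_inv_into_f_f[OF cell_code_inj])

lemma cell_code_less: "cs \<in> cell_lists n t \<Longrightarrow> cell_code n t cs < work_dim n t"
  using bij_betwE[OF cell_code_bij] by fastforce

lemma cell_code_decode: "z < work_dim n t \<Longrightarrow> cell_code n t (cell_decode n t z) = z"
  unfolding cell_decode_def by (rule f_the_inv_into_f_bij_betw[OF cell_code_bij]) auto

lemma cell_decode_in: "z < work_dim n t \<Longrightarrow> cell_decode n t z \<in> cell_lists n t"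
  unfolding cell_decode_def
  by (rule the_inv_into_into[OF cell_code_inj]) (use cell_code_bij in \<open>auto simp: bij_betw_def\<close>)

lemma cell_code_eq_iff: "cs \<in> cell_lists n t \<Longrightarrow> cs' \<in> cell_lists n t \<Longrightarrow> cell_code n t cs = cell_code n t cs' \<longleftrightarrow> cs = cs'"
  using cell_code_inj inj_onD by metis

lemma work_dim_pos: "n \<ge> 1 \<Longrightarrow> work_dim n t \<ge> 1"
proof -
  assume "n \<ge> 1"
  then have "replicate (Suc t) (0, False) \<in> cell_lists n t" unfolding cell_lists_def by auto
  then have "cell_lists n t \<noteq> {}" by auto
  then show ?thesis unfolding work_dim_def by (simp add: Suc_leI card_gt_0_iff)
qed

definition swap_cell :: "nat \<Rightarrow> nat \<Rightarrow> nat \<Rightarrow> qbasis \<Rightarrow> qbasis" where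
  "swap_cell n t l s = (let cs = cell_decode n t (snd (snd s)) in
     (fst (cs!l), snd (cs!l), cell_code n t (cs[l := (fst s, fst (snd s))])))"

lemma update_in_cell_lists: "cs \<in> cell_lists n t \<Longrightarrow> i < n \<Longrightarrow> cs[l := (i, b)] \<in> cell_lists n t"
  unfolding cell_lists_def by (auto dest: subsetD[OF set_update_subset_insert])

lemma nth_in_cell_lists: "cs \<in> cell_lists n t \<Longrightarrow> l \<le> t \<Longrightarrow> fst (cs!l) < n"
  unfolding cell_lists_def by auto

lemma swap_cell_code:
  "cs \<in> cell_lists n t \<Longrightarrow> swap_cell n t l (i, b, cell_code n t cs) = (fst (cs!l), snd (cs!l), cell_code n t (cs[l := (i,b)]))"
  unfolding swap_cell_def by simp

lemma swap_cell_in_qspace: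
  assumes "l \<le> t" "s \<in> qspace n (work_dim n t)"
  shows "swap_cell n t l s \<in> qspace n (work_dim n t)"
proof -
  obtain i b z where s: "s = (i, b, z)" by (cases s) auto
  have z: "z < work_dim n t" "i < n" using assms s by auto
  have cs: "cell_decode n t z \<in> cell_lists n t" using cell_decode_in[OF z(1)] .
  show ?thesis unfolding s swap_cell_def using nth_in_cell_lists[OF cs assms(1)] cell_code_less[OF update_in_cell_lists[OF cs z(2)]]
    by (simp add: Let_def)
qed

lemma swap_cell_involutive:
  assumes "l \<le> t" "s \<in> qspace n (work_dim n t)"
  shows "swap_cell n t l (swap_cell n t l s) = s"
proof -
  obtain i b z where s: "s = (i, b, z)" by (cases s) auto
  have z: "z < work_dim n t" "i < n" using assms s by auto
  have cs: "cell_decode n t z \<in> cell_lists n t" using cell_decode_in[OF z(1)] .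
  have len: "l < length (cell_decode n t z)" using cs assms(1) unfolding cell_lists_def by auto
  have "swap_cell n t l s = (fst (cell_decode n t z ! l), snd (cell_decode n t z ! l), cell_code n t ((cell_decode n t z)[l := (i,b)]))"
    unfolding s swap_cell_def by (simp add: Let_def)
  also have "swap_cell n t l \<dots> = (i, b, cell_code n t (((cell_decode n t z)[l := (i,b)])[l := cell_decode n t z ! l]))"
    by (subst swap_cell_code[OF update_in_cell_lists[OF cs z(2)]]) (simp add: len)
  also have "\<dots> = s" using len by (simp add: s cell_code_decode[OF z(1)])
  finally show ?thesis .
qed

lemma swap_cell_bij: "l \<le> t \<Longrightarrow> bij_betw (swap_cell n t l) (qspace n (work_dim n t)) (qspace n (work_dim n t))"
  by (rule bij_betw_byWitness[where f'="swap_cell n t l"]) (auto simp: swap_cell_involutive swap_cell_in_qspace)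

text \<open>After the oracle call, \<open>query_step i\<close> stores index and answer in cell \<open>i\<close> and loads the
  contents of cell \<open>i + 1\<close> into the register.\<close>

definition query_step :: "nat \<Rightarrow> nat \<Rightarrow> nat \<Rightarrow> qbasis \<Rightarrow> qbasis" where
  "query_step n t i = swap_cell n t (Suc i) \<circ> swap_cell n t i"

lemma query_step_bij: "i < t \<Longrightarrow> bij_betw (query_step n t i) (qspace n (work_dim n t)) (qspace n (work_dim n t))"
  unfolding query_step_def by (rule bij_betw_trans) (auto intro: swap_cell_bij)

lemma query_step_in_qspace: "i < t \<Longrightarrow> query_step n t i ` qspace n (work_dim n t) \<subseteq> qspace n (work_dim n t)"
  using query_step_bij bij_betw_imp_surj_on by blast

text \<open>A branch \<open>(J, j, \<beta>)\<close> of the computation consists of \<open>t\<close> positions \<open>J\<close> to be checked, a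
  position \<open>j\<close> for Fourier sampling and a phase bit \<open>\<beta>\<close>. Before query \<open>i < t\<close> the register
  holds \<open>(J!i, False)\<close> and cell \<open>c\<close> holds \<open>(J!c, x!(J!c))\<close> for \<open>c < i\<close>, \<open>(0, False)\<close> for \<open>c = i\<close>,
  \<open>(J!c, False)\<close> for \<open>i < c < t\<close>, and \<open>(j, \<beta>)\<close> for \<open>c = t\<close>; after the \<open>t\<close> checks, \<open>(j, \<beta>)\<close>
  has moved to the register for the final query.\<close>

definition index_lists :: "nat \<Rightarrow> nat \<Rightarrow> nat list set" where
  "index_lists n t = {J. set J \<subseteq> {..<n} \<and> length J = t}"

definition branches :: "nat \<Rightarrow> nat \<Rightarrow> nat \<Rightarrow> (nat list \<times> nat \<times> bool) set" where
  "branches n t K = index_lists n t \<times> {..<K} \<times> UNIV"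

lemma finite_index_lists[simp]: "finite (index_lists n t)"
  unfolding index_lists_def by (rule finite_lists_length_eq) auto

lemma card_index_lists: "card (index_lists n t) = n^t"
  unfolding index_lists_def by (subst card_lists_length_eq) auto

lemma finite_branches[simp]: "finite (branches n t K)"
  unfolding branches_def by auto

lemma card_branches: "card (branches n t K) = n^t * K * 2"
  unfolding branches_def by (simp add: card_cartesian_product card_index_lists)

definition cells_at :: "bool list \<Rightarrow> nat \<Rightarrow> nat \<Rightarrow> nat list \<times> nat \<times> bool \<Rightarrow> (nat \<times> bool) list" where
  "cells_at x t i \<omega> = map (\<lambda>c. if c < i then (fst \<omega> ! c, oracle_bit x (fst \<omega> ! c))
      else if c = i then (0, False) else if c < t then (fst \<omega> ! c, False) else (fst (snd \<omega>), snd (snd \<omega>))) [0..<Suc t]"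

definition branch_basis :: "bool list \<Rightarrow> nat \<Rightarrow> nat \<Rightarrow> nat \<Rightarrow> nat list \<times> nat \<times> bool \<Rightarrow> qbasis" where
  "branch_basis x n t i \<omega> = (if i < t then fst \<omega> ! i else fst (snd \<omega>), if i < t then False else snd (snd \<omega>),
      cell_code n t (cells_at x t i \<omega>))"

lemma length_cells_at[simp]: "length (cells_at x t i \<omega>) = Suc t"
  unfolding cells_at_def by simp

lemma nth_cells_at: "c \<le> t \<Longrightarrow> cells_at x t i \<omega> ! c = (if c < i then (fst \<omega> ! c, oracle_bit x (fst \<omega> ! c))
      else if c = i then (0, False) else if c < t then (fst \<omega> ! c, False) else (fst (snd \<omega>), snd (snd \<omega>)))"
  unfolding cells_at_def by (simp del: upt_Suc add: nth_map_upt)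

lemma branches_iff: "\<omega> \<in> branches n t K \<longleftrightarrow> set (fst \<omega>) \<subseteq> {..<n} \<and> length (fst \<omega>) = t \<and> fst (snd \<omega>) < K"
  unfolding branches_def index_lists_def by (cases \<omega>) auto

lemma cells_at_in_cell_lists:
  assumes "\<omega> \<in> branches n t K" "K \<le> n" "n \<ge> 1" "i \<le> t"
  shows "cells_at x t i \<omega> \<in> cell_lists n t"
  unfolding cell_lists_def
proof (intro CollectI conjI ballI)
  show "length (cells_at x t i \<omega>) = Suc t" by simp
  fix c assume "c \<in> set (cells_at x t i \<omega>)"
  then obtain l where l: "l < Suc t" "c = cells_at x t i \<omega> ! l" by (auto simp: in_set_conv_nth)
  have J: "\<And>l. l < t \<Longrightarrow> fst \<omega> ! l < n" using assms(1) unfolding branches_iff by (auto simp: subset_iff)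
  have j0: "fst (snd \<omega>) < n" using assms(1,2) unfolding branches_iff by auto
  show "fst c < n" using l nth_cells_at[of l t x i \<omega>] J j0 assms(3,4) by auto
qed

lemma branch_basis_in_qspace:
  assumes "\<omega> \<in> branches n t K" "K \<le> n" "n \<ge> 1" "i \<le> t"
  shows "branch_basis x n t i \<omega> \<in> qspace n (work_dim n t)"
proof -
  have J: "\<And>l. l < t \<Longrightarrow> fst \<omega> ! l < n" using assms(1) unfolding branches_iff by (auto simp: subset_iff)
  have j0: "fst (snd \<omega>) < n" using assms(1,2) unfolding branches_iff by auto
  show ?thesis unfolding branch_basis_def using J j0 cell_code_less[OF cells_at_in_cell_lists[OF assms]] by auto
qed

lemma query_step_branch_basis:
  assumes "\<omega> \<in> branches n t K" "K \<le> n" "n \<ge> 1" "i < t"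
  shows "query_step n t i (oracle_flip x (branch_basis x n t i \<omega>)) = branch_basis x n t (Suc i) \<omega>"
proof -
  let ?cs = "cells_at x t i \<omega>"
  let ?J = "fst \<omega>"
  have W: "?cs \<in> cell_lists n t" using cells_at_in_cell_lists[OF assms(1-3)] assms(4) by simp
  have Ji: "?J ! i < n" using assms(1,4) unfolding branches_iff by (auto simp: subset_iff)
  have f: "oracle_flip x (branch_basis x n t i \<omega>) = (?J ! i, oracle_bit x (?J ! i), cell_code n t ?cs)"
    unfolding branch_basis_def oracle_flip_def using assms(4) by simp
  have s1: "swap_cell n t i (?J ! i, oracle_bit x (?J ! i), cell_code n t ?cs) = (0, False, cell_code n t (?cs[i := (?J ! i, oracle_bit x (?J ! i))]))"
    using swap_cell_code[OF W] nth_cells_at[of i t x i \<omega>] assms(4) by simp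
  let ?cs' = "?cs[i := (?J ! i, oracle_bit x (?J ! i))]"
  have W': "?cs' \<in> cell_lists n t" using update_in_cell_lists[OF W Ji] .
  have c1: "?cs' ! Suc i = (if Suc i < t then (?J ! Suc i, False) else (fst (snd \<omega>), snd (snd \<omega>)))"
    using nth_cells_at[of "Suc i" t x i \<omega>] assms(4) by simp
  have eqc: "?cs'[Suc i := (0, False)] = cells_at x t (Suc i) \<omega>"
  proof (rule nth_equalityI)
    show "length (?cs'[Suc i := (0, False)]) = length (cells_at x t (Suc i) \<omega>)" by simp
    fix c assume "c < length (?cs'[Suc i := (0, False)])"
    then have c: "c \<le> t" by simp
    show "?cs'[Suc i := (0, False)] ! c = cells_at x t (Suc i) \<omega> ! c"
      using nth_cells_at[OF c, of x i \<omega>] nth_cells_at[OF c, of x "Suc i" \<omega>] assms(4) c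
      by (auto simp: nth_list_update)
  qed
  have "query_step n t i (oracle_flip x (branch_basis x n t i \<omega>)) = swap_cell n t (Suc i) (0, False, cell_code n t ?cs')"
    unfolding query_step_def f using s1 by simp
  also have "\<dots> = (fst (?cs' ! Suc i), snd (?cs' ! Suc i), cell_code n t (?cs'[Suc i := (0, False)]))"
    using swap_cell_code[OF W'] by simp
  also have "\<dots> = branch_basis x n t (Suc i) \<omega>"
    unfolding eqc branch_basis_def using c1 by auto
  finally show ?thesis .
qed

definition query_then :: "nat \<Rightarrow> nat \<Rightarrow> bool list \<Rightarrow> qstate \<Rightarrow> qop \<Rightarrow> qstate" where
  "query_then n m x = (\<lambda>\<psi> U. qapply n m U (qoracle x \<psi>))"

lemma fold_query_steps:
  assumes "K \<le> n" "n \<ge> 1" "i \<le> t"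
  shows "foldl (query_then n (work_dim n t) x) (superpos (branches n t K) c (branch_basis x n t 0)) (map (\<lambda>i. perm_op n (work_dim n t) (query_step n t i)) [0..<i])
         = superpos (branches n t K) c (branch_basis x n t i)"
  using assms(3)
proof (induction i)
  case 0 then show ?case by simp
next
  case (Suc i)
  then have it: "i < t" by simp
  have "foldl (query_then n (work_dim n t) x) (superpos (branches n t K) c (branch_basis x n t 0)) (map (\<lambda>i. perm_op n (work_dim n t) (query_step n t i)) [0..<Suc i])
      = qapply n (work_dim n t) (perm_op n (work_dim n t) (query_step n t i)) (qoracle x (superpos (branches n t K) c (branch_basis x n t i)))"
    using Suc by (simp add: query_then_def)
  also have "\<dots> = superpos (branches n t K) c (query_step n t i \<circ> (oracle_flip x \<circ> branch_basis x n t i))"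
    unfolding qoracle_superpos
    by (rule qapply_perm_op_superpos) (use branch_basis_in_qspace[OF _ assms(1,2)] it query_step_in_qspace[OF it] in auto)
  also have "\<dots> = superpos (branches n t K) c (branch_basis x n t (Suc i))"
    by (rule superpos_cong) (use query_step_branch_basis[OF _ assms(1,2) it] in auto)
  finally show ?case .
qed


section \<open>The initial state\<close>

text \<open>The initial state is the uniform superposition over all branches, with the phase
  \<open>sign \<beta>\<close> that turns the final query into a phase query.\<close>

definition sign :: "bool \<Rightarrow> real" where
  "sign b = (if b then -1 else 1)"

lemma abs_sign [simp]: "\<bar>sign b\<bar> = 1"
  unfolding sign_def by simp

lemma sign_square [simp]: "sign b * sign b = 1"
  unfolding sign_def by simp

definition init_amp :: "nat \<Rightarrow> nat \<Rightarrow> nat \<Rightarrow> real" where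
  "init_amp n t K = 1 / sqrt (real (card (branches n t K)))"

definition branch_amp :: "nat \<Rightarrow> nat \<Rightarrow> nat \<Rightarrow> nat list \<times> nat \<times> bool \<Rightarrow> real" where
  "branch_amp n t K \<omega> = init_amp n t K * sign (snd (snd \<omega>))"

definition init_vector :: "nat \<Rightarrow> nat \<Rightarrow> nat \<Rightarrow> qbasis \<Rightarrow> real" where
  "init_vector n t K s = (\<Sum>\<omega>\<in>branches n t K. if branch_basis [] n t 0 \<omega> = s then branch_amp n t K \<omega> else 0)"

definition init_op :: "nat \<Rightarrow> nat \<Rightarrow> nat \<Rightarrow> qop" where
  "init_op n t K = householder_op n (work_dim n t) (init_vector n t K)"

lemma branch_basis_0_indep: "branch_basis x n t 0 \<omega> = branch_basis [] n t 0 \<omega>"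
  unfolding branch_basis_def cells_at_def by simp

lemma inj_on_branch_basis_0:
  assumes "t \<ge> 1" "K \<le> n" "n \<ge> 1"
  shows "inj_on (branch_basis [] n t 0) (branches n t K)"
proof (rule inj_onI)
  fix \<omega> \<omega>' assume o: "\<omega> \<in> branches n t K" "\<omega>' \<in> branches n t K"
    and eq: "branch_basis [] n t 0 \<omega> = branch_basis [] n t 0 \<omega>'"
  have "cells_at [] t 0 \<omega> \<in> cell_lists n t" "cells_at [] t 0 \<omega>' \<in> cell_lists n t"
    using cells_at_in_cell_lists[OF o(1) assms(2,3)] cells_at_in_cell_lists[OF o(2) assms(2,3)] by auto
  moreover have "cell_code n t (cells_at [] t 0 \<omega>) = cell_code n t (cells_at [] t 0 \<omega>')"
    using eq unfolding branch_basis_def by simp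
  ultimately have cells: "cells_at [] t 0 \<omega> = cells_at [] t 0 \<omega>'" using cell_code_eq_iff by blast
  have lens: "length (fst \<omega>) = t" "length (fst \<omega>') = t" using o unfolding branches_iff by auto
  have "fst \<omega> = fst \<omega>'"
  proof (rule nth_equalityI)
    fix c assume c: "c < length (fst \<omega>)"
    show "fst \<omega> ! c = fst \<omega>' ! c"
    proof (cases "c = 0")
      case True then show ?thesis using eq assms(1) unfolding branch_basis_def by simp
    next
      case False
      have "cells_at [] t 0 \<omega> ! c = cells_at [] t 0 \<omega>' ! c" using cells by simp
      then show ?thesis using nth_cells_at[of c t "[]" 0 \<omega>] nth_cells_at[of c t "[]" 0 \<omega>'] c lens False by simp
    qed
  qed (use lens in simp)
  moreover have "cells_at [] t 0 \<omega> ! t = cells_at [] t 0 \<omega>' ! t" using cells by simp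
  then have "snd \<omega> = snd \<omega>'" using nth_cells_at[of t t "[]" 0 \<omega>] nth_cells_at[of t t "[]" 0 \<omega>'] assms(1)
    by (simp add: prod_eq_iff)
  ultimately show "\<omega> = \<omega>'" by (simp add: prod_eq_iff)
qed

lemma card_branches_ge_2: "n \<ge> 1 \<Longrightarrow> K \<ge> 1 \<Longrightarrow> card (branches n t K) \<ge> 2"
  unfolding card_branches by simp

lemma init_amp_square: "(init_amp n t K)^2 = 1 / real (card (branches n t K))"
  unfolding init_amp_def by (simp add: power_divide)

lemma init_amp_pos: "n \<ge> 1 \<Longrightarrow> K \<ge> 1 \<Longrightarrow> init_amp n t K > 0"
  unfolding init_amp_def using card_branches_ge_2[of n K t] by simp

lemma init_amp_less_1: "n \<ge> 1 \<Longrightarrow> K \<ge> 1 \<Longrightarrow> init_amp n t K < 1"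
  unfolding init_amp_def using card_branches_ge_2[of n K t] by simp

context
  fixes n t K :: nat
  assumes t: "t \<ge> 1" and K: "1 \<le> K" "K \<le> n"
begin

private lemma n_pos: "n \<ge> 1"
  using K by simp

lemma init_vector_branch_basis:
  assumes "\<omega> \<in> branches n t K"
  shows "init_vector n t K (branch_basis [] n t 0 \<omega>) = branch_amp n t K \<omega>"
proof -
  have "init_vector n t K (branch_basis [] n t 0 \<omega>) =
      (\<Sum>\<omega>'\<in>branches n t K. if \<omega>' = \<omega> then branch_amp n t K \<omega>' else 0)"
    unfolding init_vector_def using inj_onD[OF inj_on_branch_basis_0[OF t K(2) n_pos]] assms
    by (intro sum.cong) auto
  then show ?thesis using assms by (simp add: sum.delta')
qed

lemma init_vector_outside: "s \<notin> branch_basis [] n t 0 ` branches n t K \<Longrightarrow> init_vector n t K s = 0"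
  unfolding init_vector_def by (intro sum.neutral) auto

lemma init_vector_norm: "(\<Sum>s\<in>qspace n (work_dim n t). (init_vector n t K s)^2) = 1"
proof -
  have "branch_basis [] n t 0 ` branches n t K \<subseteq> qspace n (work_dim n t)"
    using branch_basis_in_qspace[OF _ K(2) n_pos] by auto
  then have "(\<Sum>s\<in>qspace n (work_dim n t). (init_vector n t K s)^2) =
      (\<Sum>s\<in>branch_basis [] n t 0 ` branches n t K. (init_vector n t K s)^2)"
    by (intro sum.mono_neutral_right) (auto simp: init_vector_outside)
  also have "\<dots> = (\<Sum>\<omega>\<in>branches n t K. (init_amp n t K)^2)"
    by (simp add: sum.reindex[OF inj_on_branch_basis_0[OF t K(2) n_pos]] init_vector_branch_basis
        branch_amp_def power_mult_distrib power2_eq_square[of "sign _"])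
  also have "\<dots> = 1"
    using card_branches_ge_2[OF n_pos K(1), of t] by (auto simp: init_amp_square)
  finally show ?thesis .
qed

lemma init_vector_neq_1: "init_vector n t K s \<noteq> 1"
proof (cases "s \<in> branch_basis [] n t 0 ` branches n t K")
  case True
  then obtain \<omega> where "\<omega> \<in> branches n t K" "s = branch_basis [] n t 0 \<omega>" by auto
  then have "\<bar>init_vector n t K s\<bar> = init_amp n t K"
    using init_vector_branch_basis init_amp_pos[OF n_pos K(1), of t] by (simp add: branch_amp_def abs_mult)
  then show ?thesis using init_amp_less_1[OF n_pos K(1), of t] by auto
qed (simp add: init_vector_outside)

lemma init_op_unitary: "is_unitary n (work_dim n t) (init_op n t K)"
  unfolding init_op_def
  by (rule householder_op_unitary[OF n_pos work_dim_pos[OF n_pos] init_vector_norm init_vector_neq_1])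

lemma qapply_init_op:
  "qapply n (work_dim n t) (init_op n t K) qinit =
    superpos (branches n t K) (\<lambda>\<omega>. complex_of_real (branch_amp n t K \<omega>)) (branch_basis x n t 0)"
proof (rule ext)
  fix s
  have "branch_basis x n t 0 \<omega> \<noteq> s" if "s \<notin> qspace n (work_dim n t)" "\<omega> \<in> branches n t K" for \<omega>
    using branch_basis_in_qspace[OF that(2) K(2) n_pos] that(1) by auto
  then show "qapply n (work_dim n t) (init_op n t K) qinit s =
      superpos (branches n t K) (\<lambda>\<omega>. complex_of_real (branch_amp n t K \<omega>)) (branch_basis x n t 0) s"
    unfolding init_op_def
      qapply_householder_op_qinit[OF n_pos work_dim_pos[OF n_pos] init_vector_norm init_vector_neq_1]
      superpos_def init_vector_def branch_basis_0_indep[of x]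
    by (auto simp: of_real_sum if_distrib cong: if_cong intro: sum.neutral)
qed

end

section \<open>The final state and the acceptance probability\<close>

text \<open>After the \<open>t\<close> checking queries, the phase query at \<open>j\<close> and the Hadamard transform on
  the index register perform Fourier sampling.\<close>

definition tester_ops :: "nat \<Rightarrow> nat \<Rightarrow> nat \<Rightarrow> qop list" where
  "tester_ops n t r =
    map (\<lambda>i. perm_op n (work_dim n t) (query_step n t i)) [0..<t] @ [hadamard_op n (work_dim n t) (2*r)]"

definition final_cells :: "bool list \<Rightarrow> nat \<Rightarrow> nat list \<Rightarrow> (nat \<times> bool) list" where
  "final_cells x t J = map (\<lambda>c. if c < t then (J ! c, oracle_bit x (J ! c)) else (0, False)) [0..<Suc t]"

definition fourier_corr :: "bool list \<Rightarrow> nat \<Rightarrow> nat \<Rightarrow> real" where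
  "fourier_corr x r a = (\<Sum>j<4^r. sign (oracle_bit x j) * walsh (2*r) a j)"

definition record_weight :: "bool list \<Rightarrow> nat \<Rightarrow> nat \<Rightarrow> nat \<Rightarrow> real" where
  "record_weight x n t z = (\<Sum>J\<in>index_lists n t. if z = cell_code n t (final_cells x t J) then 1 else 0)"

lemma cells_at_final: "cells_at x t t \<omega> = final_cells x t (fst \<omega>)"
  unfolding cells_at_def final_cells_def by (rule map_cong) auto

lemma oracle_flip_branch_basis_final:
  "oracle_flip x (branch_basis x n t t \<omega>) =
    (fst (snd \<omega>), snd (snd \<omega>) \<noteq> oracle_bit x (fst (snd \<omega>)), cell_code n t (final_cells x t (fst \<omega>)))"
  unfolding branch_basis_def oracle_flip_def cells_at_final by simp

lemma final_cells_in_cell_lists: "J \<in> index_lists n t \<Longrightarrow> n \<ge> 1 \<Longrightarrow> final_cells x t J \<in> cell_lists n t"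
  unfolding cell_lists_def final_cells_def index_lists_def by (auto simp: subset_iff)

lemma nth_final_cells: "c < t \<Longrightarrow> final_cells x t J ! c = (J ! c, oracle_bit x (J ! c))"
  unfolding final_cells_def by (simp del: upt_Suc add: nth_map_upt)

lemma final_cells_inj:
  assumes "J \<in> index_lists n t" "J' \<in> index_lists n t" "final_cells x t J = final_cells x t J'"
  shows "J = J'"
proof (rule nth_equalityI)
  show "length J = length J'" using assms(1,2) unfolding index_lists_def by simp
  fix c assume "c < length J"
  then have "c < t" using assms(1) unfolding index_lists_def by simp
  then show "J ! c = J' ! c" using arg_cong[OF assms(3), of "\<lambda>cs. cs ! c"] by (simp add: nth_final_cells)
qed

lemma sum_branches:
  "(\<Sum>\<omega>\<in>branches n t K. g \<omega>) = (\<Sum>J\<in>index_lists n t. \<Sum>j<K. g (J, j, True) + g (J, j, False))"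
proof -
  have "(\<Sum>\<omega>\<in>branches n t K. g \<omega>) = (\<Sum>J\<in>index_lists n t. \<Sum>p\<in>{..<K} \<times> (UNIV::bool set). g (J, p))"
    unfolding branches_def by (subst sum.cartesian_product) (simp add: case_prod_beta')
  also have "\<dots> = (\<Sum>J\<in>index_lists n t. \<Sum>j<K. \<Sum>\<beta>\<in>(UNIV::bool set). g (J, j, \<beta>))"
    by (rule sum.cong[OF refl]) (subst sum.cartesian_product, simp add: case_prod_beta')
  finally show ?thesis by (simp add: UNIV_bool add.commute)
qed

definition records_agree :: "nat \<Rightarrow> nat \<Rightarrow> nat \<Rightarrow> (nat \<times> bool) list \<Rightarrow> bool" where
  "records_agree r t a cs = (\<forall>c<t. snd (cs!c) = (walsh (2*r) a (fst (cs!c) mod 4^r) = -1))"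

definition accept_set :: "nat \<Rightarrow> nat \<Rightarrow> nat \<Rightarrow> qbasis set" where
  "accept_set n t r = {s \<in> qspace n (work_dim n t). fst s < 4^r \<and> quad_sign r (fst s) = 1 \<and>
     records_agree r t (fst s) (cell_decode n t (snd (snd s)))}"

definition tester_accept_prob :: "nat \<Rightarrow> nat \<Rightarrow> nat \<Rightarrow> bool list \<Rightarrow> real" where
  "tester_accept_prob n t r = qaccept_prob n (work_dim n t) (init_op n t (4^r)) (tester_ops n t r) (accept_set n t r)"

definition agreements :: "bool list \<Rightarrow> nat \<Rightarrow> nat \<Rightarrow> nat \<Rightarrow> nat" where
  "agreements x r n a = card {j. j < n \<and> oracle_bit x j = (walsh (2*r) a (j mod 4^r) = -1)}"

lemma card_records_agree:
  "card {J \<in> index_lists n t. records_agree r t a (final_cells x t J)} = agreements x r n a ^ t"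
proof -
  have "{J \<in> index_lists n t. records_agree r t a (final_cells x t J)} =
        {J. set J \<subseteq> {j. j < n \<and> oracle_bit x j = (walsh (2*r) a (j mod 4^r) = -1)} \<and> length J = t}"
    unfolding index_lists_def records_agree_def
    by (auto simp: nth_final_cells subset_iff in_set_conv_nth)
  then show ?thesis unfolding agreements_def by (simp add: card_lists_length_eq)
qed

lemma sum_record_weight_records_agree:
  assumes "n \<ge> 1"
  shows "(\<Sum>z<work_dim n t. if records_agree r t a (cell_decode n t z) then record_weight x n t z else 0)
    = real (agreements x r n a ^ t)"
proof -
  have "(\<Sum>z<work_dim n t. if records_agree r t a (cell_decode n t z) then record_weight x n t z else 0)
      = (\<Sum>z<work_dim n t. \<Sum>J\<in>index_lists n t.
           if z = cell_code n t (final_cells x t J) then (if records_agree r t a (final_cells x t J) then 1 else 0) else 0)"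
  proof (intro sum.cong refl)
    fix z
    have "(if records_agree r t a (cell_decode n t z) then record_weight x n t z else 0)
       = (\<Sum>J\<in>index_lists n t. if records_agree r t a (cell_decode n t z) then (if z = cell_code n t (final_cells x t J) then 1 else 0) else 0)"
      unfolding record_weight_def by (cases "records_agree r t a (cell_decode n t z)") simp_all
    also have "\<dots> = (\<Sum>J\<in>index_lists n t. if z = cell_code n t (final_cells x t J) then (if records_agree r t a (final_cells x t J) then 1 else 0) else 0)"
      using cell_decode_code[OF final_cells_in_cell_lists[OF _ assms]] by (intro sum.cong refl) auto
    finally show "(if records_agree r t a (cell_decode n t z) then record_weight x n t z else 0) = \<dots>" .
  qed
  also have "\<dots> = (\<Sum>J\<in>index_lists n t. \<Sum>z<work_dim n t.
      if z = cell_code n t (final_cells x t J) then (if records_agree r t a (final_cells x t J) then 1 else 0) else 0)"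
    by (rule sum.swap)
  also have "\<dots> = (\<Sum>J\<in>index_lists n t. if records_agree r t a (final_cells x t J) then 1 else 0)"
    by (intro sum.cong refl) (auto simp: sum.delta' cell_code_less[OF final_cells_in_cell_lists[OF _ assms]])
  also have "\<dots> = real (card {J \<in> index_lists n t. records_agree r t a (final_cells x t J)})"
    by (simp add: sum.If_cases Int_def conj_commute)
  finally show ?thesis by (simp add: card_records_agree)
qed

context
  fixes n t r :: nat
  assumes t: "t \<ge> 1" and K: "4^r \<le> n"
begin

private lemma tester_n_pos: "n \<ge> 1"
  using K by (metis one_le_numeral one_le_power order_trans)

private lemma K_pos: "1 \<le> (4::nat)^r"
  by simp

lemma qfinal_tester:
  "qfinal n (work_dim n t) (init_op n t (4^r)) (tester_ops n t r) x =
   (\<lambda>s. if s \<in> qspace n (work_dim n t) then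
      (\<Sum>\<omega>\<in>branches n t (4^r). complex_of_real (branch_amp n t (4^r) \<omega>) *
         hadamard_op n (work_dim n t) (2*r) s (oracle_flip x (branch_basis x n t t \<omega>))) else 0)"
proof -
  let ?c = "\<lambda>\<omega>. complex_of_real (branch_amp n t (4^r) \<omega>)"
  have "qfinal n (work_dim n t) (init_op n t (4^r)) (tester_ops n t r) x
     = query_then n (work_dim n t) x (foldl (query_then n (work_dim n t) x)
         (superpos (branches n t (4^r)) ?c (branch_basis x n t 0))
         (map (\<lambda>i. perm_op n (work_dim n t) (query_step n t i)) [0..<t])) (hadamard_op n (work_dim n t) (2*r))"
    unfolding qfinal_def tester_ops_def qapply_init_op[OF t K_pos K, where x=x] query_then_def[symmetric]
    by simp
  also have "\<dots> = query_then n (work_dim n t) x (superpos (branches n t (4^r)) ?c (branch_basis x n t t))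
      (hadamard_op n (work_dim n t) (2*r))"
    using fold_query_steps[OF K tester_n_pos, of t t x ?c] by simp
  also have "\<dots> = qapply n (work_dim n t) (hadamard_op n (work_dim n t) (2*r))
      (superpos (branches n t (4^r)) ?c (oracle_flip x \<circ> branch_basis x n t t))"
    unfolding query_then_def qoracle_superpos ..
  also have "\<dots> = (\<lambda>s. if s \<in> qspace n (work_dim n t) then
      (\<Sum>\<omega>\<in>branches n t (4^r). ?c \<omega> * hadamard_op n (work_dim n t) (2*r) s ((oracle_flip x \<circ> branch_basis x n t t) \<omega>)) else 0)"
    by (rule qapply_superpos) (use branch_basis_in_qspace[OF _ K tester_n_pos] in auto)
  also have "\<dots> = (\<lambda>s. if s \<in> qspace n (work_dim n t) then
      (\<Sum>\<omega>\<in>branches n t (4^r). ?c \<omega> * hadamard_op n (work_dim n t) (2*r) s (oracle_flip x (branch_basis x n t t \<omega>))) else 0)"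
    by (intro ext if_cong refl sum.cong) simp
  finally show ?thesis .
qed

lemma qfinal_tester_value:
  assumes a: "a < 4^r" and s: "(a, b, z) \<in> qspace n (work_dim n t)"
  shows "qfinal n (work_dim n t) (init_op n t (4^r)) (tester_ops n t r) x (a, b, z)
     = complex_of_real (record_weight x n t z * (init_amp n t (4^r) * sign b * fourier_corr x r a / sqrt (4^r)))"
proof -
  let ?K = "4^r::nat"
  let ?g = "\<lambda>\<omega>. branch_amp n t ?K \<omega> *
    (if b = (snd (snd \<omega>) \<noteq> oracle_bit x (fst (snd \<omega>))) \<and> z = cell_code n t (final_cells x t (fst \<omega>))
     then hadamard_entry (2*r) a (fst (snd \<omega>)) else 0)"
  have "qfinal n (work_dim n t) (init_op n t ?K) (tester_ops n t r) x (a, b, z) =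
      (\<Sum>\<omega>\<in>branches n t ?K. complex_of_real (branch_amp n t ?K \<omega>) *
         hadamard_op n (work_dim n t) (2*r) (a, b, z) (oracle_flip x (branch_basis x n t t \<omega>)))"
    using s by (simp add: qfinal_tester)
  also have "\<dots> = (\<Sum>\<omega>\<in>branches n t ?K. complex_of_real (?g \<omega>))"
  proof (rule sum.cong[OF refl])
    fix \<omega> assume "\<omega> \<in> branches n t ?K"
    then have "oracle_flip x (branch_basis x n t t \<omega>) \<in> qspace n (work_dim n t)"
      using branch_basis_in_qspace[OF _ K tester_n_pos] by simp
    then show "complex_of_real (branch_amp n t ?K \<omega>) * hadamard_op n (work_dim n t) (2*r) (a, b, z)
        (oracle_flip x (branch_basis x n t t \<omega>)) = complex_of_real (?g \<omega>)"
      unfolding hadamard_op_def using s by (auto simp: oracle_flip_branch_basis_final)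
  qed
  also have "\<dots> = complex_of_real (\<Sum>\<omega>\<in>branches n t ?K. ?g \<omega>)" by (simp only: of_real_sum)
  also have "(\<Sum>\<omega>\<in>branches n t ?K. ?g \<omega>) = (\<Sum>J\<in>index_lists n t. \<Sum>j<?K.
      if z = cell_code n t (final_cells x t J) then
        init_amp n t ?K * sign b * (sign (oracle_bit x j) * walsh (2*r) a j) / sqrt ?K else 0)"
    unfolding sum_branches
  proof (intro sum.cong refl)
    fix J j assume j: "j \<in> {..<?K}"
    have "hadamard_entry (2*r) a j = walsh (2*r) a j / sqrt ?K"
      using a j unfolding hadamard_entry_def by (simp add: power4_eq_power2)
    then show "?g (J, j, True) + ?g (J, j, False) = (if z = cell_code n t (final_cells x t J) then
        init_amp n t ?K * sign b * (sign (oracle_bit x j) * walsh (2*r) a j) / sqrt ?K else 0)"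
      by (cases b; cases "oracle_bit x j") (auto simp: branch_amp_def sign_def)
  qed
  also have "\<dots> = record_weight x n t z * (init_amp n t ?K * sign b * fourier_corr x r a / sqrt ?K)"
    unfolding record_weight_def fourier_corr_def sum_distrib_right
    by (intro sum.cong refl) (auto simp: sum_distrib_left sum_divide_distrib)
  finally show ?thesis by simp
qed

lemma record_weight_idem: "record_weight x n t z * record_weight x n t z = record_weight x n t z"
proof (cases "\<exists>J\<^sub>0\<in>index_lists n t. z = cell_code n t (final_cells x t J\<^sub>0)")
  case True
  then obtain J\<^sub>0 where J\<^sub>0: "J\<^sub>0 \<in> index_lists n t" "z = cell_code n t (final_cells x t J\<^sub>0)" by blast
  have "(z = cell_code n t (final_cells x t J)) = (J = J\<^sub>0)" if "J \<in> index_lists n t" for J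
    using J\<^sub>0 that cell_code_eq_iff[OF final_cells_in_cell_lists[OF that tester_n_pos, of x]
        final_cells_in_cell_lists[OF J\<^sub>0(1) tester_n_pos, of x]] final_cells_inj[OF that J\<^sub>0(1), of x] by auto
  then have "record_weight x n t z = (\<Sum>J\<in>index_lists n t. if J = J\<^sub>0 then 1 else 0)"
    unfolding record_weight_def by (intro sum.cong) auto
  then show ?thesis using J\<^sub>0 by simp
next
  case False
  then have "record_weight x n t z = 0" unfolding record_weight_def by (intro sum.neutral) auto
  then show ?thesis by simp
qed

lemma cmod_qfinal_tester:
  assumes "s \<in> accept_set n t r"
  shows "(cmod (qfinal n (work_dim n t) (init_op n t (4^r)) (tester_ops n t r) x s))^2
     = record_weight x n t (snd (snd s)) * ((init_amp n t (4^r))^2 * (fourier_corr x r (fst s))^2 / 4^r)"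
proof -
  obtain a b z where s: "s = (a, b, z)" by (cases s) auto
  have "(a, b, z) \<in> qspace n (work_dim n t)" "a < 4^r" using assms s unfolding accept_set_def by auto
  then have "(cmod (qfinal n (work_dim n t) (init_op n t (4^r)) (tester_ops n t r) x s))^2
      = (record_weight x n t z * (init_amp n t (4^r) * sign b * fourier_corr x r a / sqrt (4^r)))^2"
    using qfinal_tester_value[of a b z x] unfolding s by (simp only: norm_of_real power2_abs)
  also have "\<dots> = (record_weight x n t z * record_weight x n t z) * (init_amp n t (4^r))^2 *
      (sign b * sign b) * (fourier_corr x r a)^2 / (sqrt (4^r))^2"
    by (simp add: power2_eq_square field_simps)
  also have "\<dots> = record_weight x n t z * ((init_amp n t (4^r))^2 * (fourier_corr x r a)^2 / 4^r)"
    unfolding record_weight_idem sign_square by simp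
  finally show ?thesis using s by simp
qed

lemma tester_accept_prob_eq:
  "tester_accept_prob n t r x =
   (\<Sum>a<4^r. if quad_sign r a = 1 then (fourier_corr x r a / 4^r)^2 * (real (agreements x r n a) / n)^t else 0)"
proof -
  let ?K = "4^r::nat" and ?m = "work_dim n t"
  define Y where "Y a = (init_amp n t ?K)^2 * (fourier_corr x r a)^2 / ?K" for a
  let ?P = "\<lambda>s. fst s < ?K \<and> quad_sign r (fst s) = 1 \<and> records_agree r t (fst s) (cell_decode n t (snd (snd s)))"
  have "tester_accept_prob n t r x = (\<Sum>s\<in>accept_set n t r. record_weight x n t (snd (snd s)) * Y (fst s))"
    unfolding tester_accept_prob_def qaccept_prob_def Y_def by (intro sum.cong refl) (simp add: cmod_qfinal_tester)
  also have "\<dots> = (\<Sum>s\<in>qspace n ?m. if ?P s then record_weight x n t (snd (snd s)) * Y (fst s) else 0)"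
    unfolding accept_set_def by (rule sum.inter_filter) simp
  also have "\<dots> = (\<Sum>a<n. \<Sum>b\<in>(UNIV::bool set). \<Sum>z<?m. if ?P (a, b, z) then record_weight x n t z * Y a else 0)"
    by (subst sum_qspace) (simp only: fst_conv snd_conv)
  also have "\<dots> = (\<Sum>a<n. if a < ?K \<and> quad_sign r a = 1 then 2 * Y a * real (agreements x r n a ^ t) else 0)"
  proof (intro sum.cong refl)
    fix a
    show "(\<Sum>b\<in>(UNIV::bool set). \<Sum>z<?m. if ?P (a, b, z) then record_weight x n t z * Y a else 0)
        = (if a < ?K \<and> quad_sign r a = 1 then 2 * Y a * real (agreements x r n a ^ t) else 0)"
    proof (cases "a < ?K \<and> quad_sign r a = 1")
      case True
      have "(\<Sum>z<?m. if ?P (a, b, z) then record_weight x n t z * Y a else 0) = Y a * real (agreements x r n a ^ t)" for b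
        using True sum_record_weight_records_agree[OF tester_n_pos, where t=t and r=r and a=a and x=x, symmetric]
        by (simp add: sum_distrib_left if_distrib mult.commute cong: if_cong)
      then show ?thesis using True by (simp add: UNIV_bool)
    qed (auto intro: sum.neutral)
  qed
  also have "\<dots> = (\<Sum>a<?K. if quad_sign r a = 1 then 2 * Y a * real (agreements x r n a ^ t) else 0)"
    using K by (subst sum.mono_neutral_right[of "{..<n}" "{..<?K}"]) auto
  also have "\<dots> = (\<Sum>a<?K. if quad_sign r a = 1 then (fourier_corr x r a / ?K)^2 * (real (agreements x r n a) / n)^t else 0)"
  proof (intro sum.cong refl if_cong)
    fix a
    have "(init_amp n t ?K)^2 = 1 / (real n ^ t * real ?K * 2)"
      by (simp add: init_amp_square card_branches)
    then show "2 * Y a * real (agreements x r n a ^ t) = (fourier_corr x r a / ?K)^2 * (real (agreements x r n a) / n)^t"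
      unfolding Y_def using tester_n_pos by (simp add: field_simps power_divide power2_eq_square)
  qed
  finally show ?thesis by (simp only: of_nat_power of_nat_numeral)
qed

end

section \<open>Correctness of the tester\<close>

lemma walsh_parseval:
  fixes f :: "nat \<Rightarrow> real"
  shows "(\<Sum>a<2^k. (\<Sum>j<2^k. f j * walsh k a j)^2) = 2^k * (\<Sum>j<2^k. (f j)^2)"
proof -
  have "(\<Sum>j<2^k. f j * walsh k a j)^2 = (\<Sum>j<2^k. \<Sum>j'<2^k. f j * f j' * walsh k a (xor j j'))" for a :: nat
    unfolding power2_eq_square sum_product walsh_xor_right by (intro sum.cong refl) simp
  then have "(\<Sum>a<2^k. (\<Sum>j<2^k. f j * walsh k a j)^2) =
      (\<Sum>a<2^k. \<Sum>j<2^k. \<Sum>j'<2^k. f j * f j' * walsh k a (xor j j'))"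
    by simp
  also have "\<dots> = (\<Sum>j<2^k. \<Sum>j'<2^k. \<Sum>a<2^k. f j * f j' * walsh k a (xor j j'))"
    by (subst sum.swap) (intro sum.cong refl sum.swap)
  also have "\<dots> = (\<Sum>j<2^k. \<Sum>j'::nat<2^k. if j' = j then 2^k * (f j)^2 else (0::real))"
  proof (intro sum.cong refl)
    fix j j' :: nat assume "j \<in> {..<2^k}" "j' \<in> {..<2^k}"
    then have "(\<Sum>a<2^k. walsh k a (xor j j')) = (if j' = j then 2^k else 0)"
      using sum_walsh[OF xor_less_pow2[of j k j']] by (auto simp: xor_eq_0_iff)
    then show "(\<Sum>a<2^k. f j * f j' * walsh k a (xor j j')) = (if j' = j then 2^k * (f j)^2 else (0::real))"
      by (simp add: sum_distrib_left[symmetric] power2_eq_square)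
  qed
  finally show ?thesis by (simp add: sum_distrib_left)
qed

lemma sum_fourier_corr_square: "(\<Sum>a<4^r. (fourier_corr x r a)^2) = (4^r)^2"
  using walsh_parseval[where k = "2*r" and f = "\<lambda>j. sign (oracle_bit x j)"]
  unfolding fourier_corr_def power4_eq_power2 by (simp add: power2_eq_square)

lemma fourier_corr_code_word:
  assumes "4^r \<le> n" "s < 4^r"
  shows "fourier_corr (code_word r n s) r s = 4^r"
proof -
  have "sign (oracle_bit (code_word r n s) j) * walsh (2*r) s j = 1" if "j < 4^r" for j
    using that assms walsh_cases[of "2*r" s j]
    by (auto simp: oracle_bit_code_word code_pos_def sign_def)
  then show ?thesis unfolding fourier_corr_def by simp
qed

lemma agreements_code_word: "agreements (code_word r n s) r n s = n"
proof -
  have "{j. j < n \<and> oracle_bit (code_word r n s) j = (walsh (2*r) s (j mod 4^r) = -1)} = {..<n}"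
    by (auto simp: oracle_bit_code_word code_pos_def)
  then show ?thesis unfolding agreements_def by simp
qed

lemma agreements_plus_hamming:
  assumes "length x = n"
  shows "agreements x r n a + hamming x (code_word r n a) = n"
proof -
  let ?A = "{j. j < n \<and> oracle_bit x j = (walsh (2*r) a (j mod 4^r) = -1)}"
  let ?D = "{i. i < length x \<and> x ! i \<noteq> code_word r n a ! i}"
  have D: "?D = {j. j < n \<and> \<not> (oracle_bit x j = (walsh (2*r) a (j mod 4^r) = -1))}"
    using assms by (auto simp: nth_code_word oracle_bit_def)
  have "card ?A + card ?D = card (?A \<union> ?D)" unfolding D by (rule card_Un_disjoint[symmetric]) auto
  also have "?A \<union> ?D = {..<n}" unfolding D by auto
  finally show ?thesis unfolding agreements_def hamming_def by simp
qed

lemma one_minus_power_le_third: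
  assumes "0 \<le> 1 - e" "2 \<le> e * real t"
  shows "(1 - e)^t \<le> 1/3"
proof -
  have "(1 - e)^t \<le> (exp (-e))^t"
    using assms(1) exp_ge_add_one_self[of "-e"] by (intro power_mono) auto
  also have "\<dots> = exp (real t * (-e))" by (rule exp_of_nat_mult[symmetric])
  also have "\<dots> \<le> exp (-2)" using assms(2) by (simp add: mult.commute)
  also have "\<dots> \<le> 1/3"
    using exp_ge_add_one_self[of 2] by (simp add: exp_minus field_simps)
  finally show ?thesis .
qed

context
  fixes n t r :: nat
  assumes t: "t \<ge> 1" and K: "4^r \<le> n"
begin

lemma tester_unitary:
  "is_unitary n (work_dim n t) (init_op n t (4^r))"
  "\<forall>U\<in>set (tester_ops n t r). is_unitary n (work_dim n t) U"
proof -
  show "is_unitary n (work_dim n t) (init_op n t (4^r))"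
    by (rule init_op_unitary[OF t _ K]) simp
  have "2^(2*r) \<le> n" using K by (simp add: power4_eq_power2)
  then show "\<forall>U\<in>set (tester_ops n t r). is_unitary n (work_dim n t) U"
    unfolding tester_ops_def using perm_op_unitary[OF query_step_bij] hadamard_op_unitary by auto
qed

lemma tester_accept_prob_code_word:
  assumes "s < 4^r" "quad_sign r s = 1"
  shows "tester_accept_prob n t r (code_word r n s) \<ge> 1"
proof -
  let ?x = "code_word r n s"
  have "n \<ge> 1" using K by (metis one_le_numeral one_le_power order_trans)
  then have "(1::real) = (if quad_sign r s = 1 then (fourier_corr ?x r s / 4^r)^2 * (real (agreements ?x r n s) / n)^t else 0)"
    using assms fourier_corr_code_word[OF K assms(1)] agreements_code_word by simp
  also have "\<dots> \<le> tester_accept_prob n t r ?x"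
    unfolding tester_accept_prob_eq[OF t K] by (rule member_le_sum) (use assms in auto)
  finally show ?thesis .
qed

lemma tester_accept_prob_le:
  fixes eps :: real
  assumes "0 \<le> 1 - eps" and agree: "\<And>a. a < 4^r \<Longrightarrow> quad_sign r a = 1 \<Longrightarrow> real (agreements x r n a) \<le> (1 - eps) * n"
  shows "tester_accept_prob n t r x \<le> (1 - eps)^t"
proof -
  have "n \<ge> 1" using K by (metis one_le_numeral one_le_power order_trans)
  have "tester_accept_prob n t r x \<le> (\<Sum>a<4^r. (fourier_corr x r a / 4^r)^2 * (1 - eps)^t)"
    unfolding tester_accept_prob_eq[OF t K]
  proof (rule sum_mono)
    fix a :: nat assume "a \<in> {..<4^r}"
    then have "quad_sign r a = 1 \<Longrightarrow> (real (agreements x r n a) / n)^t \<le> (1 - eps)^t"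
      using agree \<open>n \<ge> 1\<close> by (intro power_mono) (auto simp: divide_le_eq)
    then show "(if quad_sign r a = 1 then (fourier_corr x r a / 4^r)^2 * (real (agreements x r n a) / n)^t else 0)
        \<le> (fourier_corr x r a / 4^r)^2 * (1 - eps)^t"
      using assms(1) by (auto intro: mult_left_mono)
  qed
  also have "\<dots> = (\<Sum>a<4^r. (fourier_corr x r a)^2) * (1 - eps)^t / (4^r)^2"
    by (simp add: power_divide sum_distrib_right sum_divide_distrib)
  also have "\<dots> = (1 - eps)^t"
    using sum_fourier_corr_square[where r = r and x = x] by simp
  finally show ?thesis .
qed

end

lemma quantum_tester_quad_code_lang:
  assumes n: "n \<ge> 1" and t: "t \<ge> 1" and eps: "0 < eps" "eps < 1" "2 \<le> eps * real t"
  shows "quantum_tester quad_code_lang n eps (Suc t)"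
  unfolding quantum_tester_def
proof (intro exI conjI allI impI)
  let ?r = "block_exp n"
  have K: "4^?r \<le> n" using power4_block_exp_le[OF n] .
  show "work_dim n t \<ge> 1" using work_dim_pos[OF n] .
  show "length (tester_ops n t ?r) = Suc t" unfolding tester_ops_def by simp
  show "is_unitary n (work_dim n t) (init_op n t (4^?r))"
    and "\<forall>U\<in>set (tester_ops n t ?r). is_unitary n (work_dim n t) U"
    using tester_unitary[OF t K] by auto
  show "accept_set n t ?r \<subseteq> qspace n (work_dim n t)" unfolding accept_set_def by auto
  fix x :: "bool list" assume len: "length x = n"
  show "qaccept_prob n (work_dim n t) (init_op n t (4^?r)) (tester_ops n t ?r) (accept_set n t ?r) x \<ge> 2/3"
    if mem: "x \<in> quad_code_lang"
  proof -
    obtain s where "s < 4^?r" "quad_sign ?r s = 1" "x = code_word ?r n s"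
      using mem len by (rule quad_code_langE)
    then have "tester_accept_prob n t ?r x \<ge> 1" using tester_accept_prob_code_word[OF t K] by simp
    then show ?thesis unfolding tester_accept_prob_def by simp
  qed
  assume far: "eps_far quad_code_lang n eps x"
  have "real (agreements x ?r n a) \<le> (1 - eps) * n" if "a < 4^?r" "quad_sign ?r a = 1" for a
  proof -
    have "real (hamming x (code_word ?r n a)) > eps * real n"
      using far code_word_in_quad_code_lang[OF that] unfolding eps_far_def by simp
    moreover have "real (agreements x ?r n a) + real (hamming x (code_word ?r n a)) = real n"
      using agreements_plus_hamming[OF len, of ?r a] by (metis of_nat_add)
    ultimately show ?thesis by (simp add: algebra_simps)
  qed
  then have "tester_accept_prob n t ?r x \<le> (1 - eps)^t"
    using eps by (intro tester_accept_prob_le[OF t K]) auto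
  also have "\<dots> \<le> 1/3" using eps by (intro one_minus_power_le_third) auto
  finally show "qaccept_prob n (work_dim n t) (init_op n t (4^?r)) (tester_ops n t ?r) (accept_set n t ?r) x \<le> 1/3"
    unfolding tester_accept_prob_def .
qed

text \<open>For \<open>eps \<ge> 1\<close> no word is \<open>eps\<close>-far, so the algorithm accepting everything is a tester.\<close>

lemma quantum_tester_trivial:
  assumes n: "n \<ge> 1" and eps: "eps \<ge> 1"
  shows "quantum_tester quad_code_lang n eps 0"
  unfolding quantum_tester_def
proof (intro exI conjI allI impI)
  have "bij_betw id (qspace n 1) (qspace n 1)" by simp
  then show "is_unitary n 1 (perm_op n 1 id)" using perm_op_unitary by simp
  fix x :: "bool list" assume len: "length x = n"
  have "qfinal n 1 (perm_op n 1 id) [] x = (\<lambda>s. if s \<in> qspace n 1 then qinit s else 0)"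
  proof (rule ext)
    fix s
    have "(\<Sum>t\<in>qspace n 1. perm_op n 1 id s t * qinit t) = (\<Sum>t\<in>qspace n 1. if s = t then qinit t else 0)"
      by (intro sum.cong refl) (auto simp: perm_op_def)
    then have "s \<in> qspace n 1 \<Longrightarrow> (\<Sum>t\<in>qspace n 1. perm_op n 1 id s t * qinit t) = qinit s"
      by (simp add: sum.delta)
    then show "qfinal n 1 (perm_op n 1 id) [] x s = (if s \<in> qspace n 1 then qinit s else 0)"
      by (simp add: qfinal_def qapply_def)
  qed
  then have "qaccept_prob n 1 (perm_op n 1 id) [] (qspace n 1) x =
      (\<Sum>s\<in>qspace n 1. if s = (0, False, 0) then 1 else 0)"
    unfolding qaccept_prob_def qinit_def by (intro sum.cong refl) auto
  also have "\<dots> = 1" using n by (simp add: sum.delta)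
  finally have "qaccept_prob n 1 (perm_op n 1 id) [] (qspace n 1) x = 1" .
  then show "x \<in> quad_code_lang \<Longrightarrow> qaccept_prob n 1 (perm_op n 1 id) [] (qspace n 1) x \<ge> 2/3"
    and "eps_far quad_code_lang n eps x \<Longrightarrow> qaccept_prob n 1 (perm_op n 1 id) [] (qspace n 1) x \<le> 1/3"
  proof -
    assume far: "eps_far quad_code_lang n eps x"
    have "code_word (block_exp n) n 0 \<in> quad_code_lang" by (rule code_word_in_quad_code_lang) (auto simp: quad_sign_def)
    then have "real (hamming x (code_word (block_exp n) n 0)) > eps * real n"
      using far unfolding eps_far_def by simp
    moreover have "hamming x (code_word (block_exp n) n 0) \<le> n"
      unfolding hamming_def using len card_mono[of "{..<n}"] by (simp add: subset_iff)
    moreover have "eps * real n \<ge> real n" using eps by (simp add: mult_right_mono[of 1 eps "real n", simplified])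
    ultimately show "qaccept_prob n 1 (perm_op n 1 id) [] (qspace n 1) x \<le> 1/3" by linarith
  qed simp
qed simp_all

lemma quantum_upper_bound:
  "\<exists>C > 0. \<forall>eps > 0. \<forall>n \<ge> 1. \<exists>q. real q \<le> C / eps \<and> quantum_tester quad_code_lang n eps q"
proof (intro exI[of _ "4::real"] conjI allI impI)
  fix eps :: real and n :: nat assume eps: "0 < eps" and n: "1 \<le> n"
  show "\<exists>q. real q \<le> 4 / eps \<and> quantum_tester quad_code_lang n eps q"
  proof (cases "eps < 1")
    case False
    then show ?thesis using quantum_tester_trivial[OF n] eps by (intro exI[of _ 0]) auto
  next
    case True
    define t where "t = nat \<lceil>2 / eps\<rceil>"
    have t_ge: "real t \<ge> 2 / eps" and t_le: "real t \<le> 2 / eps + 1"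
      unfolding t_def using ceiling_correct[of "2/eps"] eps by auto
    have "2 / eps > 2" using True eps by (simp add: field_simps)
    then have "t \<ge> 1" using t_ge by linarith
    moreover have "2 \<le> eps * real t" using t_ge eps by (simp add: field_simps)
    moreover have "real (Suc t) \<le> 4 / eps"
      using t_le True eps by (simp add: field_simps)
    ultimately show ?thesis using quantum_tester_quad_code_lang[OF n _ eps True] by blast
  qed
qed simp

theorem theorem3p1:
  shows "\<exists>L :: bool list set.
     (\<exists>C > 0. \<forall>eps > 0. \<forall>n \<ge> 1. \<exists>q. real q \<le> C / eps \<and> quantum_tester L n eps q) \<and>
     (\<exists>c > 0. \<exists>N. \<forall>n \<ge> N. \<forall>q. classical_tester L n (1/3) q \<longrightarrow> real q \<ge> c * ln (real n))"
  using quantum_upper_bound classical_lower_bound by blast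

end
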